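(* Let $B=B_G(\{p_i\},\chi)$. Then: (1) the only grouplike elements of $B$ are the $x^a$, $a\in G$; (2) for $a\in G$, every $(1,x^a)$-skew primitive element of $B$ lies in $k(1-x^a)+kM$; (3) every skew primitive element of $B$ not lying in $kG$ is of the form $by_i+c(1-x_i)$ for some $i\in I$, or $by+c(1-x)$, for some scalars $b,c\in k$.
   Context: $k$ is algebraically closed of characteristic zero. Data: $G$ a subgroup of $(\mathbb{Q},+)$ containing $\mathbb{Z}$, written $\{x^a:a\in G\}$ with $x^ax^{a'}=x^{a+a'}$; index set $I$ with $|I|\ge2$; pairwise relatively prime integers $p_i\ge2$ with $1/p_i\in G$; $M$ the additive submonoid of $\mathbb{Q}$ generated by $\{1/p_i\}$; $GM=\sum_iG(1/p_i)$; $\chi:GM\to k^\times$ a homomorphism with $\chi(1/p_i^2)$ a primitive $p_i$-th root of unity. $B_G(\{p_i\},\chi)$ is generated by $x^a$ ($a\in G$), $y_i$ ($i\in I$) with relations $x^0=1$, $x^ax^{a'}=x^{a+a'}$, $x^ay_i=\chi(a/p_i)y_ix^a$, $y_iy_j=y_jy_i$, $y_i^{p_i}=y_j^{p_j}$, with $x^a$ grouplike and $\Delta(y_i)=y_i\otimes1+x_i\otimes y_i$ where $x_i:=x^{1/p_i}$. For $b\in M$ write $y^b$ for the monomial $\prod y_i^{n_i}$ where $b=\sum n_i/p_i$ (well defined), and $kM$ for the subalgebra spanned by the $y^b$; $y:=y^1=y_i^{p_i}$, $x:=x^1$. A $(1,g)$-skew primitive element $z$ satisfies $\Delta(z)=z\otimes1+g\otimes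 z$ with $g$ grouplike; $kG$ denotes the span of the $x^a$. *)

theory Defs
  imports "HOL-Computational_Algebra.Polynomial"
begin

text \<open>The Hopf algebra B_G({p_i},chi) is modelled concretely on its standard basis
  y^b x^a (b in M, a in G): an element is a finitely supported function
  (b,a) |-> coefficient of y^b x^a.  The tensor square B (x) B is modelled on the
  product basis (y^b x^a) (x) (y^b' x^a').\<close>

definition Mset :: "'i set \<Rightarrow> ('i \<Rightarrow> nat) \<Rightarrow> rat set" where
  "Mset I p = {(\<Sum>i\<in>S. of_nat (n i) / of_nat (p i)) | S n. finite S \<and> S \<subseteq> I}"

definition GMset :: "rat set \<Rightarrow> 'i set \<Rightarrow> ('i \<Rightarrow> nat) \<Rightarrow> rat set" where
  "GMset G I p = {(\<Sum>i\<in>S. g i / of_nat (p i)) | S g. finite S \<and> S \<subseteq> I \<and> (\<forall>i\<in>S. g i \<in> G)}"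

definition Bcar :: "rat set \<Rightarrow> 'i set \<Rightarrow> ('i \<Rightarrow> nat) \<Rightarrow> (rat \<times> rat \<Rightarrow> 'k::field) set" where
  "Bcar G I p = {f. finite {m. f m \<noteq> 0} \<and>
      (\<forall>m. f m \<noteq> 0 \<longrightarrow> fst m \<in> Mset I p \<and> snd m \<in> G)}"

definition Tcar :: "rat set \<Rightarrow> 'i set \<Rightarrow> ('i \<Rightarrow> nat) \<Rightarrow>
    ((rat \<times> rat) \<times> (rat \<times> rat) \<Rightarrow> 'k::field) set" where
  "Tcar G I p = {F. finite {m. F m \<noteq> 0} \<and>
      (\<forall>m. F m \<noteq> 0 \<longrightarrow> fst (fst m) \<in> Mset I p \<and> snd (fst m) \<in> G
                       \<and> fst (snd m) \<in> Mset I p \<and> snd (snd m) \<in> G)}"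

text \<open>Multiplication: (y^b1 x^a1)(y^b2 x^a2) = chi(a1*b2) y^(b1+b2) x^(a1+a2).\<close>
definition Bmul :: "(rat \<Rightarrow> 'k::field) \<Rightarrow> (rat \<times> rat \<Rightarrow> 'k) \<Rightarrow> (rat \<times> rat \<Rightarrow> 'k) \<Rightarrow> rat \<times> rat \<Rightarrow> 'k" where
  "Bmul \<chi> f g m = (\<Sum>uv\<in>{(u, v). f u \<noteq> 0 \<and> g v \<noteq> 0 \<and>
        fst u + fst v = fst m \<and> snd u + snd v = snd m}.
      f (fst uv) * g (snd uv) * \<chi> (snd (fst uv) * fst (snd uv)))"

definition Tmul :: "(rat \<Rightarrow> 'k::field) \<Rightarrow> ((rat \<times> rat) \<times> (rat \<times> rat) \<Rightarrow> 'k)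
     \<Rightarrow> ((rat \<times> rat) \<times> (rat \<times> rat) \<Rightarrow> 'k) \<Rightarrow> (rat \<times> rat) \<times> (rat \<times> rat) \<Rightarrow> 'k" where
  "Tmul \<chi> F H m = (\<Sum>UV\<in>{(U, V). F U \<noteq> 0 \<and> H V \<noteq> 0 \<and>
        fst (fst U) + fst (fst V) = fst (fst m) \<and> snd (fst U) + snd (fst V) = snd (fst m) \<and>
        fst (snd U) + fst (snd V) = fst (snd m) \<and> snd (snd U) + snd (snd V) = snd (snd m)}.
      F (fst UV) * H (snd UV) * \<chi> (snd (fst (fst UV)) * fst (fst (snd UV)))
        * \<chi> (snd (snd (fst UV)) * fst (snd (snd UV))))"

definition Bbas :: "rat \<Rightarrow> rat \<Rightarrow> rat \<times> rat \<Rightarrow> 'k::field" where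
  "Bbas b a = (\<lambda>m. if m = (b, a) then 1 else 0)"

definition Xel :: "rat \<Rightarrow> rat \<times> rat \<Rightarrow> 'k::field" where "Xel a = Bbas 0 a"
definition Yel :: "('i \<Rightarrow> nat) \<Rightarrow> 'i \<Rightarrow> rat \<times> rat \<Rightarrow> 'k::field" where
  "Yel p i = Bbas (1 / of_nat (p i)) 0"

definition tens :: "(rat \<times> rat \<Rightarrow> 'k::field) \<Rightarrow> (rat \<times> rat \<Rightarrow> 'k) \<Rightarrow> (rat \<times> rat) \<times> (rat \<times> rat) \<Rightarrow> 'k" where
  "tens f g = (\<lambda>m. f (fst m) * g (snd m))"

definition addB :: "('a \<Rightarrow> 'k::field) \<Rightarrow> ('a \<Rightarrow> 'k) \<Rightarrow> 'a \<Rightarrow> 'k" where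
  "addB f g = (\<lambda>m. f m + g m)"
definition smulB :: "'k::field \<Rightarrow> ('a \<Rightarrow> 'k) \<Rightarrow> 'a \<Rightarrow> 'k" where
  "smulB c f = (\<lambda>m. c * f m)"

text \<open>The comultiplication: the unique algebra map B \<rightarrow> B (x) B with
  Delta(x^a) = x^a (x) x^a and Delta(y_i) = y_i (x) 1 + x_i (x) y_i
  (extended by 0 outside the carrier, to make it unique as a HOL function).\<close>
definition Delta :: "rat set \<Rightarrow> 'i set \<Rightarrow> ('i \<Rightarrow> nat) \<Rightarrow> (rat \<Rightarrow> 'k::field)
    \<Rightarrow> (rat \<times> rat \<Rightarrow> 'k) \<Rightarrow> (rat \<times> rat) \<times> (rat \<times> rat) \<Rightarrow> 'k" where
  "Delta G I p \<chi> = (THE D.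
      (\<forall>f. f \<notin> Bcar G I p \<longrightarrow> D f = (\<lambda>_. 0)) \<and>
      (\<forall>f\<in>Bcar G I p. \<forall>g\<in>Bcar G I p. D (addB f g) = addB (D f) (D g)) \<and>
      (\<forall>c. \<forall>f\<in>Bcar G I p. D (smulB c f) = smulB c (D f)) \<and>
      (\<forall>f\<in>Bcar G I p. \<forall>g\<in>Bcar G I p. D (Bmul \<chi> f g) = Tmul \<chi> (D f) (D g)) \<and>
      (\<forall>a\<in>G. D (Xel a) = tens (Xel a) (Xel a)) \<and>
      (\<forall>i\<in>I. D (Yel p i) = addB (tens (Yel p i) (Xel 0))
                                 (tens (Xel (1 / of_nat (p i))) (Yel p i))))"

definition grouplike where
  "grouplike G I p \<chi> g \<longleftrightarrow> g \<in> Bcar G I p \<and> g \<noteq> (\<lambda>_. 0) \<and> Delta G I p \<chi> g = tens g g"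

definition skew_prim where
  "skew_prim G I p \<chi> g z \<longleftrightarrow> z \<in> Bcar G I p \<and> grouplike G I p \<chi> g \<and>
     Delta G I p \<chi> z = addB (tens z (Xel 0)) (tens g z)"

definition kG where "kG G I p = {f \<in> Bcar G I p. \<forall>m. f m \<noteq> 0 \<longrightarrow> fst m = 0}"
definition kM where "kM G I p = {f \<in> Bcar G I p. \<forall>m. f m \<noteq> 0 \<longrightarrow> snd m = 0}"

end

theory Submission
  imports Defs "HOL-Library.Product_Plus"
begin

text \<open>
  As \<open>x^a\<close> is grouplike,
  \<open>\<Delta>(y^b x^a) = \<Sum> c_b(b1, b2) y^b1 x^(b2 + a) \<otimes> y^b2 x^a\<close> over \<open>b1 + b2 = b\<close>, where
  \<open>c_b\<close> is read off by expanding \<open>\<Delta>(y_i1 \<cdots> y_in) = \<Prod> (y_i \<otimes> 1 + x_i \<otimes> y_i)\<close> for any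
  word of weight \<open>\<Sum> 1/p_ik = b\<close>. The expansion does not depend on the word: distinct
  letters commute, and \<open>\<Delta>(y_i^p_i) = y \<otimes> 1 + x \<otimes> y\<close> for every \<open>i\<close> because the Gaussian
  binomials \<open>[p_i choose k]\<close> vanish at the primitive root \<open>\<chi>(1/p_i^2)\<close>; by coprimality of
  the \<open>p_i\<close>, two words of equal weight differ only by permuting letters and exchanging such
  blocks. This constructs the comultiplication and shows that it is the unique map with
  the defining properties.

  The coefficient of \<open>y^b1 x^a1 \<otimes> y^b2 x^a2\<close> in \<open>\<Delta>z\<close> is \<open>z(b1 + b2, a2) c_(b1+b2)(b1, b2)\<close>
  if \<open>a1 = b2 + a2\<close> and \<open>0\<close> otherwise. Since \<open>c_b(b, 0) = c_b(0, b) = 1\<close>, comparing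
  coefficients in \<open>\<Delta>g = g \<otimes> g\<close> and \<open>\<Delta>z = z \<otimes> 1 + x^a \<otimes> z\<close> gives (1) and (2), and shows
  that a skew primitive outside \<open>kG\<close> is \<open>\<beta> y^a + c (1 - x^a)\<close>. For (3) it remains to see
  that \<open>c_a\<close> has a nonzero coefficient at some \<open>(b1, b2)\<close> with \<open>b1, b2 \<noteq> 0\<close> unless \<open>a\<close> is \<open>1\<close>
  or some \<open>1/p_i\<close>: if a letter \<open>i\<close> occurs a number \<open>n\<close> of times not divisible by \<open>p_i\<close>, then
  \<open>c_a(a - 1/p_i, 1/p_i)\<close> is the nonzero \<open>\<chi>(1/p_i^2)\<close>-integer \<open>[n]\<close>; otherwise \<open>a = N \<ge> 2\<close> is
  an integer and \<open>c_N(N - 1, 1) = N \<noteq> 0\<close> in characteristic \<open>0\<close>.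
\<close>

section \<open>Twisted convolution\<close>

definition supp :: "('a \<Rightarrow> 'k::zero) \<Rightarrow> 'a set" where
  "supp f = {m. f m \<noteq> 0}"

definition tconv :: "('a::ab_group_add \<Rightarrow> 'a \<Rightarrow> 'k::comm_semiring_1) \<Rightarrow> ('a \<Rightarrow> 'k) \<Rightarrow> ('a \<Rightarrow> 'k) \<Rightarrow> 'a \<Rightarrow> 'k" where
  "tconv \<tau> f g m = (\<Sum>uv\<in>{(u, v). f u \<noteq> 0 \<and> g v \<noteq> 0 \<and> u + v = m}. f (fst uv) * g (snd uv) * \<tau> (fst uv) (snd uv))"

lemma tconv_double_sum:
  assumes "finite X" "finite Y" "supp f \<subseteq> X" "supp g \<subseteq> Y"
  shows "tconv \<tau> f g m = (\<Sum>x\<in>X. \<Sum>y\<in>Y. if x + y = m then f x * g y * \<tau> x y else 0)"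
proof -
  have "{(u, v). f u \<noteq> 0 \<and> g v \<noteq> 0 \<and> u + v = m} \<subseteq> X \<times> Y"
    using assms(3,4) by (auto simp: supp_def)
  then have "tconv \<tau> f g m = (\<Sum>uv\<in>X \<times> Y. if fst uv + snd uv = m then f (fst uv) * g (snd uv) * \<tau> (fst uv) (snd uv) else 0)"
    unfolding tconv_def using assms(1,2) by (intro sum.mono_neutral_cong_left) auto
  then show ?thesis
    by (simp add: sum.cartesian_product split_beta)
qed

lemma tconv_sum_left:
  assumes "finite X" "supp f \<subseteq> X" "finite (supp g)"
  shows "tconv \<tau> f g m = (\<Sum>x\<in>X. f x * g (m - x) * \<tau> x (m - x))"
proof -
  have "(\<Sum>y\<in>supp g. if x + y = m then f x * g y * \<tau> x y else 0) = f x * g (m - x) * \<tau> x (m - x)" for x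
  proof -
    have "(\<Sum>y\<in>supp g. if x + y = m then f x * g y * \<tau> x y else 0)
        = (\<Sum>y\<in>supp g. if y = m - x then f x * g y * \<tau> x y else 0)"
      by (rule sum.cong) (auto simp: algebra_simps)
    also have "\<dots> = f x * g (m - x) * \<tau> x (m - x)"
      using assms(3) by (auto simp: supp_def)
    finally show ?thesis .
  qed
  then show ?thesis
    using tconv_double_sum[OF assms(1,3,2) order_refl] by simp
qed

lemma tconv_sum_right:
  assumes "finite Y" "supp g \<subseteq> Y" "finite (supp f)"
  shows "tconv \<tau> f g m = (\<Sum>y\<in>Y. f (m - y) * g y * \<tau> (m - y) y)"
proof -
  have inner: "(\<Sum>x\<in>supp f. if x + y = m then f x * g y * \<tau> x y else 0) = f (m - y) * g y * \<tau> (m - y) y" for y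
  proof -
    have "(\<Sum>x\<in>supp f. if x + y = m then f x * g y * \<tau> x y else 0)
        = (\<Sum>x\<in>supp f. if x = m - y then f x * g y * \<tau> x y else 0)"
      by (rule sum.cong) (auto simp: algebra_simps)
    also have "\<dots> = f (m - y) * g y * \<tau> (m - y) y"
      using assms(3) by (auto simp: supp_def)
    finally show ?thesis .
  qed
  have "tconv \<tau> f g m = (\<Sum>x\<in>supp f. \<Sum>y\<in>Y. if x + y = m then f x * g y * \<tau> x y else 0)"
    by (rule tconv_double_sum[OF assms(3,1) order_refl assms(2)])
  also have "\<dots> = (\<Sum>y\<in>Y. \<Sum>x\<in>supp f. if x + y = m then f x * g y * \<tau> x y else 0)"
    by (rule sum.swap)
  finally show ?thesis
    by (simp only: inner)
qed

lemma supp_tconv: "supp (tconv \<tau> f g) \<subseteq> (\<lambda>(u, v). u + v) ` (supp f \<times> supp g)"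
proof
  fix m assume m: "m \<in> supp (tconv \<tau> f g)"
  have "{(u, v). f u \<noteq> 0 \<and> g v \<noteq> 0 \<and> u + v = m} \<noteq> {}"
  proof
    assume "{(u, v). f u \<noteq> 0 \<and> g v \<noteq> 0 \<and> u + v = m} = {}"
    then have "tconv \<tau> f g m = 0"
      unfolding tconv_def by (simp only: sum.empty)
    with m show False
      by (simp add: supp_def)
  qed
  then show "m \<in> (\<lambda>(u, v). u + v) ` (supp f \<times> supp g)"
    by (force simp: supp_def)
qed

lemma finite_supp_tconv: "finite (supp f) \<Longrightarrow> finite (supp g) \<Longrightarrow> finite (supp (tconv \<tau> f g))"
  by (rule finite_subset[OF supp_tconv]) auto

lemma tconv_scale_cocycle:
  assumes "\<And>u v. u \<in> supp f \<Longrightarrow> v \<in> supp g \<Longrightarrow> \<tau>' u v = K * \<tau> u v"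
  shows "tconv \<tau>' f g m = K * tconv \<tau> f g m"
  unfolding tconv_def using assms by (auto simp: sum_distrib_left supp_def mult_ac intro!: sum.cong)

lemma tconv_smult:
  fixes F H :: "'a::ab_group_add \<Rightarrow> 'k::idom"
  shows "tconv \<tau> (\<lambda>x. s * F x) (\<lambda>y. t * H y) m = s * t * tconv \<tau> F H m"
proof (cases "s = 0 \<or> t = 0")
  case False
  then have "{(u, v). s * F u \<noteq> 0 \<and> t * H v \<noteq> 0 \<and> u + v = m} = {(u, v). F u \<noteq> 0 \<and> H v \<noteq> 0 \<and> u + v = m}"
    by auto
  then show ?thesis
    unfolding tconv_def by (simp add: sum_distrib_left mult_ac)
qed (auto simp: tconv_def)

lemma tconv_assoc:
  assumes ff: "finite (supp f)" and fg: "finite (supp g)" and fh: "finite (supp h)"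
    and cocycle: "\<And>u v w. u \<in> supp f \<Longrightarrow> v \<in> supp g \<Longrightarrow> w \<in> supp h \<Longrightarrow>
                   \<tau> u v * \<tau> (u + v) w = \<tau> v w * \<tau> u (v + w)"
  shows "tconv \<tau> (tconv \<tau> f g) h = tconv \<tau> f (tconv \<tau> g h)"
proof
  fix m
  have "tconv \<tau> (tconv \<tau> f g) h m = (\<Sum>w\<in>supp h. tconv \<tau> f g (m - w) * h w * \<tau> (m - w) w)"
    by (rule tconv_sum_right[OF fh order_refl finite_supp_tconv[OF ff fg]])
  also have "\<dots> = (\<Sum>w\<in>supp h. \<Sum>u\<in>supp f. f u * g (m - w - u) * h w * (\<tau> u (m - w - u) * \<tau> (m - w) w))"
    by (rule sum.cong[OF refl], subst tconv_sum_left[OF ff order_refl fg])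
       (simp add: sum_distrib_right mult.assoc mult.left_commute)
  also have "\<dots> = (\<Sum>u\<in>supp f. \<Sum>w\<in>supp h. f u * g (m - w - u) * h w * (\<tau> u (m - w - u) * \<tau> (m - w) w))"
    by (rule sum.swap)
  also have "\<dots> = (\<Sum>u\<in>supp f. \<Sum>w\<in>supp h. f u * g (m - u - w) * h w * (\<tau> (m - u - w) w * \<tau> u (m - u)))"
  proof (intro sum.cong refl)
    fix u w assume u: "u \<in> supp f" and w: "w \<in> supp h"
    have e: "m - w - u = m - u - w" "u + (m - u - w) = m - w" "(m - u - w) + w = m - u"
      by (simp_all add: algebra_simps)
    show "f u * g (m - w - u) * h w * (\<tau> u (m - w - u) * \<tau> (m - w) w) =
          f u * g (m - u - w) * h w * (\<tau> (m - u - w) w * \<tau> u (m - u))"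
    proof (cases "m - u - w \<in> supp g")
      case True
      show ?thesis using cocycle[OF u True w] by (simp only: e)
    qed (simp add: supp_def e)
  qed
  also have "\<dots> = (\<Sum>u\<in>supp f. f u * tconv \<tau> g h (m - u) * \<tau> u (m - u))"
    by (rule sum.cong[OF refl], subst tconv_sum_right[OF fh order_refl fg])
       (simp add: sum_distrib_right sum_distrib_left mult.assoc mult.left_commute)
  also have "\<dots> = tconv \<tau> f (tconv \<tau> g h) m"
    by (rule tconv_sum_left[OF ff order_refl finite_supp_tconv[OF fg fh], symmetric])
  finally show "tconv \<tau> (tconv \<tau> f g) h m = tconv \<tau> f (tconv \<tau> g h) m" .
qed

lemma tconv_sum:
  assumes A: "finite A" and B: "finite B"
    and FA: "\<And>u. u \<in> A \<Longrightarrow> finite (supp (F u))" and HB: "\<And>v. v \<in> B \<Longrightarrow> finite (supp (H v))"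
  shows "tconv \<tau> (\<lambda>x. \<Sum>u\<in>A. F u x) (\<lambda>y. \<Sum>v\<in>B. H v y) m = (\<Sum>u\<in>A. \<Sum>v\<in>B. tconv \<tau> (F u) (H v) m)"
proof -
  define X where "X = (\<Union>u\<in>A. supp (F u))"
  define Y where "Y = (\<Union>v\<in>B. supp (H v))"
  have fX: "finite X" and fY: "finite Y"
    using A B FA HB by (simp_all add: X_def Y_def)
  have sX: "supp (\<lambda>x. \<Sum>u\<in>A. F u x) \<subseteq> X" and sY: "supp (\<lambda>y. \<Sum>v\<in>B. H v y) \<subseteq> Y"
    unfolding X_def Y_def supp_def by (auto intro: ccontr simp: sum.neutral)
  let ?t = "\<lambda>u v x y. if x + y = m then F u x * H v y * \<tau> x y else 0"
  have "tconv \<tau> (\<lambda>x. \<Sum>u\<in>A. F u x) (\<lambda>y. \<Sum>v\<in>B. H v y) m = (\<Sum>x\<in>X. \<Sum>y\<in>Y. \<Sum>u\<in>A. \<Sum>v\<in>B. ?t u v x y)"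
    unfolding tconv_double_sum[OF fX fY sX sY]
    by (intro sum.cong refl) (auto simp: sum_distrib_left sum_distrib_right mult.assoc intro: sum.swap)
  also have "\<dots> = (\<Sum>u\<in>A. \<Sum>v\<in>B. \<Sum>x\<in>X. \<Sum>y\<in>Y. ?t u v x y)"
  proof -
    have "(\<Sum>x\<in>X. \<Sum>y\<in>Y. \<Sum>u\<in>A. \<Sum>v\<in>B. ?t u v x y) = (\<Sum>x\<in>X. \<Sum>u\<in>A. \<Sum>y\<in>Y. \<Sum>v\<in>B. ?t u v x y)"
      by (intro sum.cong refl) (rule sum.swap)
    also have "\<dots> = (\<Sum>u\<in>A. \<Sum>x\<in>X. \<Sum>y\<in>Y. \<Sum>v\<in>B. ?t u v x y)"
      by (rule sum.swap)
    also have "\<dots> = (\<Sum>u\<in>A. \<Sum>x\<in>X. \<Sum>v\<in>B. \<Sum>y\<in>Y. ?t u v x y)"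
      by (intro sum.cong refl) (rule sum.swap)
    also have "\<dots> = (\<Sum>u\<in>A. \<Sum>v\<in>B. \<Sum>x\<in>X. \<Sum>y\<in>Y. ?t u v x y)"
      by (intro sum.cong refl) (rule sum.swap)
    finally show ?thesis .
  qed
  also have "\<dots> = (\<Sum>u\<in>A. \<Sum>v\<in>B. tconv \<tau> (F u) (H v) m)"
    by (intro sum.cong refl tconv_double_sum[symmetric, OF fX fY]) (auto simp: X_def Y_def)
  finally show ?thesis .
qed

lemma supp_Bbas: "supp (Bbas b a :: _ \<Rightarrow> 'k::field) = {(b, a)}"
  by (auto simp: supp_def Bbas_def)

lemma tconv_Bbas:
  fixes \<tau> :: "_ \<Rightarrow> _ \<Rightarrow> 'k::field"
  shows "tconv \<tau> (Bbas (fst u) (snd u)) (Bbas (fst v) (snd v)) m = (if m = u + v then \<tau> u v else 0)"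
proof -
  have "supp (Bbas (fst u) (snd u) :: _ \<Rightarrow> 'k) = {u}" "supp (Bbas (fst v) (snd v) :: _ \<Rightarrow> 'k) = {v}"
    by (simp_all add: supp_Bbas)
  then show ?thesis
    by (subst tconv_double_sum[where X="{u}" and Y="{v}"]) (auto simp: Bbas_def)
qed

lemma tconv_Bbas_0_right:
  fixes f :: "rat \<times> rat \<Rightarrow> 'k::field"
  assumes "finite (supp f)" "\<And>u. \<tau> u (0, 0) = 1"
  shows "tconv \<tau> f (Bbas 0 0) = f"
proof
  fix m
  have "tconv \<tau> f (Bbas 0 0) m = (\<Sum>y\<in>{(0, 0)}. f (m - y) * Bbas 0 0 y * \<tau> (m - y) y)"
    by (rule tconv_sum_right[OF _ _ assms(1)]) (auto simp: supp_Bbas)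
  then show "tconv \<tau> f (Bbas 0 0) m = f m"
    using assms(2) by (simp add: Bbas_def flip: zero_prod_def)
qed

lemma tconv_Bbas_0_left:
  fixes g :: "rat \<times> rat \<Rightarrow> 'k::field"
  assumes "finite (supp g)" "\<And>v. \<tau> (0, 0) v = 1"
  shows "tconv \<tau> (Bbas 0 0) g = g"
proof
  fix m
  have "tconv \<tau> (Bbas 0 0) g m = (\<Sum>x\<in>{(0, 0)}. Bbas 0 0 x * g (m - x) * \<tau> x (m - x))"
    by (rule tconv_sum_left[OF _ _ assms(1)]) (auto simp: supp_Bbas)
  then show "tconv \<tau> (Bbas 0 0) g m = g m"
    using assms(2) by (simp add: Bbas_def flip: zero_prod_def)
qed

lemma eq_sum_Bbas:
  fixes f :: "rat \<times> rat \<Rightarrow> 'k::field"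
  assumes "finite (supp f)"
  shows "f = (\<lambda>M. \<Sum>m\<in>supp f. f m * Bbas (fst m) (snd m) M)"
proof
  fix M
  have "(\<Sum>m\<in>supp f. f m * Bbas (fst m) (snd m) M) = (\<Sum>m\<in>supp f. if m = M then f m else 0)"
    by (intro sum.cong refl) (auto simp: Bbas_def)
  also have "\<dots> = f M"
    using assms by (simp add: supp_def)
  finally show "f M = (\<Sum>m\<in>supp f. f m * Bbas (fst m) (snd m) M)"
    by simp
qed

section \<open>Gaussian binomial coefficients\<close>

text \<open>The \<open>q\<close>-Pascal rule: these are the coefficients of \<open>(u + v)^n\<close> when \<open>v u = q u v\<close>.\<close>

primrec qbinom :: "'k::comm_ring_1 \<Rightarrow> nat \<Rightarrow> nat \<Rightarrow> 'k" where
  "qbinom q 0 k = (if k = 0 then 1 else 0)"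
| "qbinom q (Suc n) k = (if k = 0 then 0 else qbinom q n (k - 1)) + q ^ k * qbinom q n k"

lemma qbinom_eq_0_above: "n < k \<Longrightarrow> qbinom q n k = 0"
  by (induction n arbitrary: k) auto

lemma qbinom_0_right: "qbinom q n 0 = 1"
  by (induction n) auto

lemma qbinom_diag: "qbinom q n n = 1"
  by (induction n) (auto simp: qbinom_eq_0_above)

lemma qbinom_mult_prod:
  "k \<le> n \<Longrightarrow> qbinom q n k * (\<Prod>j\<in>{1..k}. 1 - q ^ j) = (\<Prod>j\<in>{Suc (n - k)..n}. 1 - q ^ j)"
proof (induction n arbitrary: k)
  case (Suc n)
  show ?case
  proof (cases k)
    case (Suc k')
    define X where "X = (\<Prod>j\<in>{Suc (n - k')..n}. 1 - q ^ j)"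
    have k': "k' \<le> n"
      using Suc.prems Suc by simp
    have low: "qbinom q n k' * (\<Prod>j\<in>{1..k'}. 1 - q ^ j) = X"
      using Suc.IH[OF k'] by (simp add: X_def)
    have high: "qbinom q n (Suc k') * (\<Prod>j\<in>{1..Suc k'}. 1 - q ^ j) = (1 - q ^ (n - k')) * X"
    proof (cases "k' = n")
      case False
      then have "Suc k' \<le> n" "Suc (n - Suc k') = n - k'"
        using k' by simp_all
      then show ?thesis
        using Suc.IH[of "Suc k'"] by (simp add: X_def prod.atLeast_Suc_atMost)
    qed (simp add: qbinom_eq_0_above)
    have "qbinom q (Suc n) k * (\<Prod>j\<in>{1..k}. 1 - q ^ j)
        = (1 - q ^ Suc k') * (qbinom q n k' * (\<Prod>j\<in>{1..k'}. 1 - q ^ j))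
          + q ^ Suc k' * (qbinom q n (Suc k') * (\<Prod>j\<in>{1..Suc k'}. 1 - q ^ j))"
      using Suc by (simp add: prod.nat_ivl_Suc' algebra_simps)
    also have "\<dots> = (1 - q ^ (Suc k' + (n - k'))) * X"
      unfolding low high by (simp add: algebra_simps power_add)
    also have "\<dots> = (\<Prod>j\<in>{Suc (Suc n - k)..Suc n}. 1 - q ^ j)"
      using k' Suc by (simp add: X_def prod.nat_ivl_Suc' Suc_diff_le)
    finally show ?thesis .
  qed (simp add: qbinom_0_right)
qed simp

lemma qbinom_root_of_unity_eq_0:
  fixes q :: "'k::idom"
  assumes "q ^ P = 1" "\<And>j. 0 < j \<Longrightarrow> j < P \<Longrightarrow> q ^ j \<noteq> 1" "0 < k" "k < P"
  shows "qbinom q P k = 0"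
proof -
  have "qbinom q P k * (\<Prod>j\<in>{1..k}. 1 - q ^ j) = (\<Prod>j\<in>{Suc (P - k)..P}. 1 - q ^ j)"
    using qbinom_mult_prod[of k P q] assms(4) by simp
  also have "\<dots> = 0"
    using assms(1,3,4) by (intro prod_zero) auto
  finally show ?thesis
    using assms(2,4) by auto
qed

lemma power_eq_1_coprime_imp_eq_1:
  fixes z :: "'a::monoid_mult"
  assumes "z ^ m = 1" "z ^ n = 1" "coprime m n"
  shows "z = 1"
proof (cases "m = 0")
  case True
  then show ?thesis
    using assms(2,3) by simp
next
  case False
  obtain x y where "m * x = n * y + gcd m n"
    using bezout_nat[OF False] by blast
  then have "z ^ (m * x) = z ^ (n * y + 1)"
    using assms(3) by simp
  then show ?thesis
    using assms(1,2) by (simp add: power_mult power_add)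
qed

lemma dvd_of_sum_fractions_eq_0:
  fixes c :: "'i \<Rightarrow> int" and p :: "'i \<Rightarrow> nat"
  assumes S: "finite S" "i \<in> S" and p0: "\<forall>j\<in>S. p j \<noteq> 0"
    and cop: "\<forall>j\<in>S. \<forall>k\<in>S. j \<noteq> k \<longrightarrow> coprime (p j) (p k)"
    and sum0: "(\<Sum>j\<in>S. of_int (c j) / of_nat (p j)) = (0::rat)"
  shows "int (p i) dvd c i"
proof -
  define P where "P j = (\<Prod>k\<in>S - {j}. int (p k))" for j
  have P: "of_int (P j) = (\<Prod>k\<in>S. of_nat (p k) :: rat) / of_nat (p j)" if "j \<in> S" for j
    using that S p0 by (simp add: P_def prod.remove)
  have "of_int (\<Sum>j\<in>S. c j * P j) = (\<Sum>j\<in>S. of_int (c j) * ((\<Prod>k\<in>S. of_nat (p k) :: rat) / of_nat (p j)))"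
    by (auto simp: P intro!: sum.cong)
  also have "\<dots> = (\<Prod>k\<in>S. of_nat (p k)) * (\<Sum>j\<in>S. of_int (c j) / of_nat (p j))"
    by (simp add: sum_distrib_left mult_ac)
  finally have "(of_int (\<Sum>j\<in>S. c j * P j) :: rat) = 0"
    using sum0 by simp
  then have "(\<Sum>j\<in>S. c j * P j) = 0"
    by (simp only: of_int_eq_0_iff)
  then have "c i * P i = - (\<Sum>j\<in>S - {i}. c j * P j)"
    using S by (simp add: sum.remove eq_neg_iff_add_eq_0)
  moreover have "int (p i) dvd (\<Sum>j\<in>S - {i}. c j * P j)"
    using S by (auto simp: P_def intro!: dvd_sum dvd_mult)
  ultimately have "int (p i) dvd c i * P i"
    by simp
  moreover have "coprime (int (p i)) (P i)"
    unfolding P_def using cop S by (intro prod_coprime_right) auto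
  ultimately show ?thesis
    by (simp add: coprime_dvd_mult_left_iff)
qed

lemma count_list_replicate_self [simp]: "count_list (replicate n x) x = n"
  by (induction n) auto

lemma mset_split_replicate:
  assumes "n \<le> count_list l i"
  shows "\<exists>r. mset l = mset (replicate n i @ r)"
proof -
  obtain r where r: "mset r = mset l - replicate_mset n i"
    using ex_mset by blast
  have "replicate_mset n i \<subseteq># mset l"
    using assms by (simp add: count_le_replicate_mset_subset_eq[symmetric] count_mset)
  then have "mset (replicate n i @ r) = mset l"
    using r by (simp add: subset_mset.add_diff_inverse)
  then show ?thesis
    by metis
qed

section \<open>The monoid \<open>M\<close> and the character \<open>\<chi>\<close>\<close>

locale BG =
  fixes G :: "rat set" and I :: "'i set" and p :: "'i \<Rightarrow> nat" and \<chi> :: "rat \<Rightarrow> 'k::field_char_0"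
  assumes G_add_closed: "\<forall>a\<in>G. \<forall>b\<in>G. a + b \<in> G"
    and Ints_subset_G: "(\<int> :: rat set) \<subseteq> G"
    and p_ge_2: "\<forall>i\<in>I. p i \<ge> 2"
    and p_coprime: "\<forall>i\<in>I. \<forall>j\<in>I. i \<noteq> j \<longrightarrow> coprime (p i) (p j)"
    and inv_p_in_G: "\<forall>i\<in>I. 1 / of_nat (p i) \<in> G"
    and chi_add: "\<forall>u\<in>GMset G I p. \<forall>v\<in>GMset G I p. \<chi> (u + v) = \<chi> u * \<chi> v"
    and chi_nonzero: "\<forall>u\<in>GMset G I p. \<chi> u \<noteq> 0"
    and chi_primitive: "\<forall>i\<in>I. \<chi> (1 / of_nat (p i) ^ 2) ^ p i = 1 \<and>
                      (\<forall>n. 0 < n \<and> n < p i \<longrightarrow> \<chi> (1 / of_nat (p i) ^ 2) ^ n \<noteq> 1)"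
begin

definition pinv :: "'i \<Rightarrow> rat" where
  "pinv i = 1 / of_nat (p i)"

text \<open>A word \<open>l = [i1, ..., in]\<close> over \<open>I\<close> stands for the monomial \<open>y_i1 \<cdots> y_in = y^(wt l)\<close>.\<close>

definition wt :: "'i list \<Rightarrow> rat" where
  "wt l = sum_list (map pinv l)"

definition Mon :: "rat set" where
  "Mon = {wt l | l. set l \<subseteq> I}"

definition q :: "'i \<Rightarrow> 'k" where
  "q i = \<chi> (pinv i * pinv i)"

lemma zero_in_G: "0 \<in> G" using Ints_subset_G by auto
lemma one_in_G: "1 \<in> G" using Ints_subset_G by auto
lemma add_in_G: "x \<in> G \<Longrightarrow> y \<in> G \<Longrightarrow> x + y \<in> G" using G_add_closed by auto

lemma pinv_pos: "i \<in> I \<Longrightarrow> pinv i > 0" using p_ge_2 by (auto simp: pinv_def)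
lemma pinv_in_G: "i \<in> I \<Longrightarrow> pinv i \<in> G" using inv_p_in_G by (auto simp: pinv_def)
lemma p_mult_pinv: "i \<in> I \<Longrightarrow> of_nat (p i) * pinv i = 1" using p_ge_2 by (force simp: pinv_def)

lemma wt_Nil[simp]: "wt [] = 0" and wt_Cons[simp]: "wt (i # l) = pinv i + wt l"
  and wt_append[simp]: "wt (l1 @ l2) = wt l1 + wt l2"
  and wt_replicate[simp]: "wt (replicate n i) = of_nat n * pinv i"
  by (simp_all add: wt_def sum_list_replicate)

lemma wt_nonneg: "set l \<subseteq> I \<Longrightarrow> wt l \<ge> 0"
  by (induction l) (auto dest: pinv_pos intro: add_nonneg_nonneg less_imp_le)

lemma wt_eq_0_iff: "set l \<subseteq> I \<Longrightarrow> wt l = 0 \<longleftrightarrow> l = []"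
proof (induction l)
  case (Cons i l)
  then have "pinv i > 0" "wt l \<ge> 0" using pinv_pos wt_nonneg by auto
  then show ?case by simp
qed simp

lemma wt_in_G: "set l \<subseteq> I \<Longrightarrow> wt l \<in> G"
  by (induction l) (auto simp: zero_in_G pinv_in_G add_in_G)

lemma Mon_nonneg: "e \<in> Mon \<Longrightarrow> e \<ge> 0" using wt_nonneg by (auto simp: Mon_def)
lemma Mon_in_G: "e \<in> Mon \<Longrightarrow> e \<in> G" using wt_in_G by (auto simp: Mon_def)
lemma zero_in_Mon: "0 \<in> Mon" unfolding Mon_def by (rule CollectI, rule exI[of _ "[]"]) simp
lemma wt_in_Mon: "set l \<subseteq> I \<Longrightarrow> wt l \<in> Mon" unfolding Mon_def by blast
lemma pinv_in_Mon: "i \<in> I \<Longrightarrow> pinv i \<in> Mon" using wt_in_Mon[of "[i]"] by simp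
lemma add_in_Mon: "e \<in> Mon \<Longrightarrow> f \<in> Mon \<Longrightarrow> e + f \<in> Mon"
proof -
  assume "e \<in> Mon" "f \<in> Mon"
  then obtain l1 l2 where "set l1 \<subseteq> I" "set l2 \<subseteq> I" "e = wt l1" "f = wt l2" by (auto simp: Mon_def)
  then show ?thesis using wt_in_Mon[of "l1 @ l2"] by simp
qed

lemma wt_mset: "mset l = mset l' \<Longrightarrow> wt l = wt l'"
proof -
  assume "mset l = mset l'"
  then have "mset (map pinv l) = mset (map pinv l')" by simp
  then have "sum_mset (mset (map pinv l)) = sum_mset (mset (map pinv l'))" by simp
  then show ?thesis unfolding wt_def by (metis sum_mset_sum_list)
qed

lemma set_replicate_subset: "i \<in> I \<Longrightarrow> set (replicate n i) \<subseteq> I" by auto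

lemma wt_remove1: "i \<in> set l \<Longrightarrow> wt l = pinv i + wt (remove1 i l)"
  unfolding wt_def by (rule sum_list_map_remove1)

lemma wt_concat: "wt (concat L) = sum_list (map wt L)"
  by (induction L) auto

lemma wt_eq_sum_count_list: "set l \<subseteq> X \<Longrightarrow> finite X \<Longrightarrow> wt l = (\<Sum>j\<in>X. of_nat (count_list l j) * pinv j)"
proof (induction l)
  case Nil then show ?case by simp
next
  case (Cons i l)
  then have "wt (i # l) = pinv i + (\<Sum>j\<in>X. of_nat (count_list l j) * pinv j)" by simp
  also have "pinv i = (\<Sum>j\<in>X. if i = j then pinv j else 0)" using Cons.prems by simp
  finally show ?case by (auto simp: sum.distrib[symmetric] distrib_right intro!: sum.cong)
qed

lemma Mset_eq_Mon: "Mset I p = Mon"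
proof
  show "Mset I p \<subseteq> Mon"
  proof
    fix x assume "x \<in> Mset I p"
    then obtain S n where S: "finite S" "S \<subseteq> I" and x: "x = (\<Sum>i\<in>S. of_nat (n i) / of_nat (p i))"
      by (auto simp: Mset_def)
    obtain l0 where l0: "set l0 = S" "distinct l0" using finite_distinct_list[OF S(1)] by blast
    define l where "l = concat (map (\<lambda>i. replicate (n i) i) l0)"
    have "wt l = sum_list (map (\<lambda>i. of_nat (n i) * pinv i) l0)"
      unfolding l_def wt_concat by (simp add: comp_def)
    also have "\<dots> = (\<Sum>i\<in>S. of_nat (n i) * pinv i)"
      using l0 by (simp add: sum_list_distinct_conv_sum_set)
    also have "\<dots> = x" unfolding x by (simp add: pinv_def)
    finally have "wt l = x" .
    moreover have "set l \<subseteq> I" using l0 S by (auto simp: l_def)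
    ultimately show "x \<in> Mon" by (auto simp: Mon_def)
  qed
next
  show "Mon \<subseteq> Mset I p"
  proof
    fix x assume "x \<in> Mon"
    then obtain l where l: "set l \<subseteq> I" "x = wt l" by (auto simp: Mon_def)
    have "wt l = (\<Sum>i\<in>set l. of_nat (count_list l i) * pinv i)"
      by (rule wt_eq_sum_count_list) auto
    then have "x = (\<Sum>i\<in>set l. of_nat (count_list l i) / of_nat (p i))"
      using l by (simp add: pinv_def)
    then show "x \<in> Mset I p" unfolding Mset_def using l by blast
  qed
qed

lemma zero_in_GMset: "0 \<in> GMset G I p"
  unfolding GMset_def by (rule CollectI, rule exI[of _ "{}"]) simp

lemma mult_pinv_in_GMset: "x \<in> G \<Longrightarrow> i \<in> I \<Longrightarrow> x * pinv i \<in> GMset G I p"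
  unfolding GMset_def
  by (rule CollectI, rule exI[of _ "{i}"], rule exI[of _ "\<lambda>_. x"]) (simp add: pinv_def)

lemma add_in_GMset: "u \<in> GMset G I p \<Longrightarrow> v \<in> GMset G I p \<Longrightarrow> u + v \<in> GMset G I p"
proof -
  assume "u \<in> GMset G I p" "v \<in> GMset G I p"
  then obtain S1 g1 S2 g2 where S: "finite S1" "S1 \<subseteq> I" "\<forall>i\<in>S1. g1 i \<in> G" "u = (\<Sum>i\<in>S1. g1 i / of_nat (p i))"
    "finite S2" "S2 \<subseteq> I" "\<forall>i\<in>S2. g2 i \<in> G" "v = (\<Sum>i\<in>S2. g2 i / of_nat (p i))"
    unfolding GMset_def by blast
  define g where "g i = (if i \<in> S1 then g1 i else 0) + (if i \<in> S2 then g2 i else 0)" for i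
  have "(\<Sum>i\<in>S1 \<union> S2. g i / of_nat (p i)) =
     (\<Sum>i\<in>S1 \<union> S2. (if i \<in> S1 then g1 i / of_nat (p i) else 0)) + (\<Sum>i\<in>S1 \<union> S2. (if i \<in> S2 then g2 i / of_nat (p i) else 0))"
    unfolding sum.distrib[symmetric] by (rule sum.cong) (auto simp: g_def add_divide_distrib)
  also have "\<dots> = u + v"
    using S by (simp add: sum.inter_restrict[symmetric] Int_absorb1 Int_absorb2)
  finally have "u + v = (\<Sum>i\<in>S1 \<union> S2. g i / of_nat (p i))" by simp
  moreover have "\<forall>i\<in>S1 \<union> S2. g i \<in> G" using S by (auto simp: g_def zero_in_G add_in_G)
  ultimately show ?thesis unfolding GMset_def using S by blast
qed

lemma mult_wt_in_GMset: "x \<in> G \<Longrightarrow> set l \<subseteq> I \<Longrightarrow> x * wt l \<in> GMset G I p"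
  by (induction l) (auto simp: zero_in_GMset distrib_left intro!: add_in_GMset mult_pinv_in_GMset)

lemma mult_Mon_in_GMset: "x \<in> G \<Longrightarrow> e \<in> Mon \<Longrightarrow> x * e \<in> GMset G I p"
  using mult_wt_in_GMset by (auto simp: Mon_def)

lemma chi_0: "\<chi> 0 = 1"
proof -
  have "\<chi> (0 + 0) = \<chi> 0 * \<chi> 0" using chi_add zero_in_GMset by blast
  moreover have "\<chi> 0 \<noteq> 0" using chi_nonzero zero_in_GMset by blast
  ultimately show ?thesis by simp
qed

lemma chi_add_right: "x \<in> G \<Longrightarrow> e \<in> Mon \<Longrightarrow> f \<in> Mon \<Longrightarrow> \<chi> (x * (e + f)) = \<chi> (x * e) * \<chi> (x * f)"
  using chi_add mult_Mon_in_GMset by (simp add: distrib_left)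

lemma chi_add_left: "x \<in> G \<Longrightarrow> y \<in> G \<Longrightarrow> e \<in> Mon \<Longrightarrow> \<chi> ((x + y) * e) = \<chi> (x * e) * \<chi> (y * e)"
  using chi_add mult_Mon_in_GMset by (simp add: distrib_right)

lemma chi_mult_wt: "x \<in> G \<Longrightarrow> set l \<subseteq> I \<Longrightarrow> \<chi> (x * wt l) = (\<Prod>j\<leftarrow>l. \<chi> (x * pinv j))"
proof (induction l)
  case Nil then show ?case by (simp add: chi_0)
next
  case (Cons i l)
  then have "\<chi> (x * wt (i # l)) = \<chi> (x * pinv i) * \<chi> (x * wt l)"
    using chi_add_right[of x "pinv i" "wt l"] pinv_in_Mon wt_in_Mon by simp
  with Cons show ?case by simp
qed

lemma chi_pinv_sq: "i \<in> I \<Longrightarrow> \<chi> (1 / of_nat (p i) ^ 2) = q i"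
  by (simp add: q_def pinv_def power2_eq_square)

lemma q_pow_p: "i \<in> I \<Longrightarrow> q i ^ p i = 1" using chi_primitive chi_pinv_sq by auto
lemma q_pow_ne_1: "i \<in> I \<Longrightarrow> 0 < n \<Longrightarrow> n < p i \<Longrightarrow> q i ^ n \<noteq> 1" using chi_primitive chi_pinv_sq by auto
lemma q_pow_mod: "i \<in> I \<Longrightarrow> q i ^ n = q i ^ (n mod p i)"
proof -
  assume i: "i \<in> I"
  have "q i ^ n = q i ^ (p i * (n div p i) + n mod p i)" by (simp only: mult_div_mod_eq)
  also have "\<dots> = (q i ^ p i) ^ (n div p i) * q i ^ (n mod p i)" by (simp only: power_add power_mult)
  finally show ?thesis using q_pow_p[OF i] by simp
qed

lemma chi_pinv: "i \<in> I \<Longrightarrow> \<chi> (pinv i) = 1"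
proof -
  assume i: "i \<in> I"
  have "\<chi> (pinv i * wt (replicate (p i) i)) = (\<Prod>j\<leftarrow>replicate (p i) i. \<chi> (pinv i * pinv j))"
    using chi_mult_wt[OF pinv_in_G[OF i] set_replicate_subset[OF i], of "p i"] by simp
  also have "\<dots> = q i ^ p i" by (simp add: q_def)
  also have "\<dots> = 1" using q_pow_p[OF i] .
  finally show ?thesis using p_mult_pinv[OF i] by (simp add: mult.commute)
qed

lemma chi_wt: "set l \<subseteq> I \<Longrightarrow> \<chi> (wt l) = 1"
proof (induction l)
  case Nil show ?case by (simp add: chi_0)
next
  case (Cons i l)
  have "\<chi> (pinv i + wt l) = \<chi> (pinv i) * \<chi> (wt l)"
    using chi_add mult_pinv_in_GMset[OF one_in_G, of i] mult_wt_in_GMset[OF one_in_G, of l] Cons.prems by simp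
  then show ?case using Cons chi_pinv by simp
qed

lemma chi_pinv_pinv_distinct: "i \<in> I \<Longrightarrow> j \<in> I \<Longrightarrow> i \<noteq> j \<Longrightarrow> \<chi> (pinv i * pinv j) = 1"
proof -
  assume i: "i \<in> I" and j: "j \<in> I" and ij: "i \<noteq> j"
  have "\<chi> (pinv i * pinv j) ^ p j = \<chi> (pinv i * wt (replicate (p j) j))"
    using chi_mult_wt[OF pinv_in_G[OF i] set_replicate_subset[OF j], of "p j"] by simp
  also have "\<dots> = \<chi> (pinv i)" using p_mult_pinv[OF j] by simp
  finally have 1: "\<chi> (pinv i * pinv j) ^ p j = 1" using chi_pinv[OF i] by simp
  have "\<chi> (pinv j * pinv i) ^ p i = \<chi> (pinv j * wt (replicate (p i) i))"
    using chi_mult_wt[OF pinv_in_G[OF j] set_replicate_subset[OF i], of "p i"] by simp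
  also have "\<dots> = \<chi> (pinv j)" using p_mult_pinv[OF i] by simp
  finally have 2: "\<chi> (pinv i * pinv j) ^ p i = 1" using chi_pinv[OF j] by (simp add: mult.commute)
  show ?thesis using power_eq_1_coprime_imp_eq_1[OF 2 1] p_coprime i j ij by blast
qed

lemma chi_pinv_wt: "i \<in> I \<Longrightarrow> set l \<subseteq> I \<Longrightarrow> \<chi> (pinv i * wt l) = q i ^ count_list l i"
proof (induction l)
  case Nil then show ?case by (simp add: chi_0)
next
  case (Cons j l)
  then have "\<chi> (pinv i * wt (j # l)) = \<chi> (pinv i * pinv j) * \<chi> (pinv i * wt l)"
    using chi_add_right[of "pinv i" "pinv j" "wt l"] pinv_in_Mon wt_in_Mon pinv_in_G by simp
  with Cons show ?case by (auto simp: q_def chi_pinv_pinv_distinct)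
qed

lemma p_dvd_count_list_diff:
  assumes l: "set l \<subseteq> I" and l': "set l' \<subseteq> I" and eq: "wt l = wt l'" and i: "i \<in> I"
  shows "int (p i) dvd (int (count_list l i) - int (count_list l' i))"
proof (cases "i \<in> set l \<union> set l'")
  case False
  then show ?thesis
    by (simp add: count_list_0_iff)
next
  case True
  let ?S = "set l \<union> set l'"
  have "wt l - wt l' = (\<Sum>j\<in>?S. of_int (int (count_list l j) - int (count_list l' j)) / of_nat (p j))"
    by (simp add: wt_eq_sum_count_list[of _ ?S] sum_subtractf diff_divide_distrib pinv_def)
  then have "(\<Sum>j\<in>?S. of_int (int (count_list l j) - int (count_list l' j)) / of_nat (p j)) = (0::rat)"
    using eq by simp
  moreover have "?S \<subseteq> I"
    using l l' by simp
  then have "\<forall>j\<in>?S. p j \<noteq> 0" "\<forall>j\<in>?S. \<forall>k\<in>?S. j \<noteq> k \<longrightarrow> coprime (p j) (p k)"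
    using p_ge_2 p_coprime by (fastforce, blast)
  ultimately show ?thesis
    using True by (intro dvd_of_sum_fractions_eq_0) auto
qed

lemma pinv_diff_notin_Mon: "i \<in> I \<Longrightarrow> j \<in> I \<Longrightarrow> i \<noteq> j \<Longrightarrow> pinv i - pinv j \<notin> Mon"
proof
  assume i: "i \<in> I" and j: "j \<in> I" and ij: "i \<noteq> j" and "pinv i - pinv j \<in> Mon"
  then obtain l where l: "set l \<subseteq> I" "pinv i - pinv j = wt l" by (auto simp: Mon_def)
  have eq: "wt [i] = wt (j # l)" using l by simp
  have d: "int (p i) dvd int (count_list [i] i) - int (count_list (j # l) i)"
    by (rule p_dvd_count_list_diff[OF _ _ eq i]) (use i j l in auto)
  show False
  proof (cases "i \<in> set l")
    case True
    have "wt l = pinv i + wt (remove1 i l)" by (rule wt_remove1[OF True])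
    moreover have "wt (remove1 i l) \<ge> 0" using l by (intro wt_nonneg) (meson order_trans set_remove1_subset)
    ultimately show False using l pinv_pos[OF j] by simp
  next
    case False
    then have "count_list (j # l) i = 0" using ij by (simp add: count_list_0_iff)
    then have "int (p i) dvd 1" using d by simp
    then show False using p_ge_2 i by force
  qed
qed

section \<open>The coproduct of a monomial\<close>

text \<open>\<open>Dword l (b1, b2)\<close> is the coefficient of \<open>y^b1 x^b2 \<otimes> y^b2\<close> in \<open>\<Delta>\<close> of the monomial of
  \<open>l\<close>; the recursion is left multiplication by \<open>\<Delta>(y_i) = y_i \<otimes> 1 + x_i \<otimes> y_i\<close>.\<close>

primrec Dword :: "'i list \<Rightarrow> rat \<times> rat \<Rightarrow> 'k" where
  "Dword [] = Bbas 0 0"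
| "Dword (i # l) = (\<lambda>m. Dword l (fst m - pinv i, snd m) + \<chi> (pinv i * fst m) * Dword l (fst m, snd m - pinv i))"

lemma Dword_nonzero_imp: "set l \<subseteq> I \<Longrightarrow> Dword l m \<noteq> 0 \<Longrightarrow> fst m \<in> Mon \<and> snd m \<in> Mon \<and> fst m + snd m = wt l"
proof (induction l arbitrary: m)
  case Nil then show ?case by (auto simp: Bbas_def zero_in_Mon split: if_splits)
next
  case (Cons i l)
  have i: "i \<in> I" and l: "set l \<subseteq> I" using Cons.prems by auto
  from Cons.prems(2) have "Dword l (fst m - pinv i, snd m) \<noteq> 0 \<or> Dword l (fst m, snd m - pinv i) \<noteq> 0" by auto
  then show ?case
  proof
    assume "Dword l (fst m - pinv i, snd m) \<noteq> 0"
    from Cons.IH[OF l this] have h: "fst m - pinv i \<in> Mon" "snd m \<in> Mon" "fst m - pinv i + snd m = wt l" by auto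
    have "fst m = (fst m - pinv i) + pinv i" by simp
    then have "fst m \<in> Mon" using add_in_Mon[OF h(1) pinv_in_Mon[OF i]] by metis
    then show ?thesis using h by simp
  next
    assume "Dword l (fst m, snd m - pinv i) \<noteq> 0"
    from Cons.IH[OF l this] have h: "fst m \<in> Mon" "snd m - pinv i \<in> Mon" "fst m + (snd m - pinv i) = wt l" by auto
    have "snd m = (snd m - pinv i) + pinv i" by simp
    then have "snd m \<in> Mon" using add_in_Mon[OF h(2) pinv_in_Mon[OF i]] by metis
    then show ?thesis using h by simp
  qed
qed

lemma Dword_neg_fst: "set l \<subseteq> I \<Longrightarrow> fst m < 0 \<Longrightarrow> Dword l m = 0"
  using Dword_nonzero_imp Mon_nonneg by fastforce
lemma Dword_neg_snd: "set l \<subseteq> I \<Longrightarrow> snd m < 0 \<Longrightarrow> Dword l m = 0"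
  using Dword_nonzero_imp Mon_nonneg by fastforce

lemma finite_supp_Dword: "finite (supp (Dword l))"
proof (induction l)
  case Nil
  have "supp (Dword []) \<subseteq> {(0,0)}" by (auto simp: supp_def Bbas_def)
  then show ?case by (rule finite_subset) simp
next
  case (Cons i l)
  have "supp (Dword (i # l)) \<subseteq> (\<lambda>m. (fst m + pinv i, snd m)) ` supp (Dword l) \<union> (\<lambda>m. (fst m, snd m + pinv i)) ` supp (Dword l)"
  proof
    fix m assume "m \<in> supp (Dword (i # l))"
    then have "Dword l (fst m - pinv i, snd m) \<noteq> 0 \<or> Dword l (fst m, snd m - pinv i) \<noteq> 0" by (auto simp: supp_def)
    then show "m \<in> (\<lambda>m. (fst m + pinv i, snd m)) ` supp (Dword l) \<union> (\<lambda>m. (fst m, snd m + pinv i)) ` supp (Dword l)"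
    proof
      assume "Dword l (fst m - pinv i, snd m) \<noteq> 0"
      then have "(fst m - pinv i, snd m) \<in> supp (Dword l)" by (simp add: supp_def)
      then show ?thesis by (intro UnI1) (rule image_eqI[where x="(fst m - pinv i, snd m)"], auto)
    next
      assume "Dword l (fst m, snd m - pinv i) \<noteq> 0"
      then have "(fst m, snd m - pinv i) \<in> supp (Dword l)" by (simp add: supp_def)
      then show ?thesis by (intro UnI2) (rule image_eqI[where x="(fst m, snd m - pinv i)"], auto)
    qed
  qed
  then show ?case by (rule finite_subset) (use Cons in auto)
qed

lemma Dword_top: "set l \<subseteq> I \<Longrightarrow> Dword l (wt l, 0) = 1"
proof (induction l)
  case Nil then show ?case by (simp add: Bbas_def)
next
  case (Cons i l)
  then have "Dword l (wt (i # l), 0 - pinv i) = 0" using pinv_pos by (intro Dword_neg_snd) auto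
  with Cons show ?case by simp
qed

lemma Dword_bot: "set l \<subseteq> I \<Longrightarrow> Dword l (0, wt l) = 1"
proof (induction l)
  case Nil then show ?case by (simp add: Bbas_def)
next
  case (Cons i l)
  then have "Dword l (0 - pinv i, wt (i # l)) = 0" using pinv_pos by (intro Dword_neg_fst) auto
  with Cons show ?case by (simp add: chi_0)
qed

lemma chi_pinv_shift: "i \<in> I \<Longrightarrow> j \<in> I \<Longrightarrow> i \<noteq> j \<Longrightarrow> e \<in> Mon \<Longrightarrow> \<chi> (pinv j * (e + pinv i)) = \<chi> (pinv j * e)"
proof -
  assume i: "i \<in> I" and j: "j \<in> I" and ij: "i \<noteq> j" and e: "e \<in> Mon"
  have "\<chi> (pinv j * (e + pinv i)) = \<chi> (pinv j * e) * \<chi> (pinv j * pinv i)"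
    by (rule chi_add_right[OF pinv_in_G[OF j] e pinv_in_Mon[OF i]])
  moreover have "\<chi> (pinv j * pinv i) = 1" using chi_pinv_pinv_distinct[OF j i] ij by simp
  ultimately show ?thesis by simp
qed

lemma Dword_swap:
  assumes i: "i \<in> I" and j: "j \<in> I" and l: "set l \<subseteq> I"
  shows "Dword (i # j # l) = Dword (j # i # l)"
proof (cases "i = j")
  case True then show ?thesis by simp
next
  case False
  show ?thesis
  proof
    fix m :: "rat \<times> rat"
    obtain x y where m: "m = (x, y)" by (cases m)
    have A: "\<chi> (pinv j * (x - pinv i)) * Dword l (x - pinv i, y - pinv j) = \<chi> (pinv j * x) * Dword l (x - pinv i, y - pinv j)"
    proof (cases "Dword l (x - pinv i, y - pinv j) = 0")
      case False
      then have "x - pinv i \<in> Mon" using Dword_nonzero_imp[OF l] by fastforce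
      then have "\<chi> (pinv j * ((x - pinv i) + pinv i)) = \<chi> (pinv j * (x - pinv i))"
        using chi_pinv_shift[OF i j \<open>i \<noteq> j\<close>] by blast
      then show ?thesis by simp
    qed simp
    have B: "\<chi> (pinv i * (x - pinv j)) * Dword l (x - pinv j, y - pinv i) = \<chi> (pinv i * x) * Dword l (x - pinv j, y - pinv i)"
    proof (cases "Dword l (x - pinv j, y - pinv i) = 0")
      case False
      then have "x - pinv j \<in> Mon" using Dword_nonzero_imp[OF l] by fastforce
      then have "\<chi> (pinv i * ((x - pinv j) + pinv j)) = \<chi> (pinv i * (x - pinv j))"
        using chi_pinv_shift[OF j i] \<open>i \<noteq> j\<close> by metis
      then show ?thesis by simp
    qed simp
    have e1: "x - pinv i - pinv j = x - pinv j - pinv i" "y - pinv i - pinv j = y - pinv j - pinv i" by (simp_all add: algebra_simps)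
    have "Dword (i # j # l) m = Dword l (x - pinv i - pinv j, y) + \<chi> (pinv j * (x - pinv i)) * Dword l (x - pinv i, y - pinv j)
        + (\<chi> (pinv i * x) * Dword l (x - pinv j, y - pinv i) + \<chi> (pinv i * x) * (\<chi> (pinv j * x) * Dword l (x, y - pinv i - pinv j)))"
      by (simp add: m distrib_left)
    also have "\<dots> = Dword l (x - pinv j - pinv i, y) + \<chi> (pinv i * (x - pinv j)) * Dword l (x - pinv j, y - pinv i)
        + (\<chi> (pinv j * x) * Dword l (x - pinv i, y - pinv j) + \<chi> (pinv j * x) * (\<chi> (pinv i * x) * Dword l (x, y - pinv j - pinv i)))"
      unfolding A B e1 by (simp add: algebra_simps)
    also have "\<dots> = Dword (j # i # l) m"
      by (simp add: m distrib_left)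
    finally show "Dword (i # j # l) m = Dword (j # i # l) m" .
  qed
qed

lemma Dword_remove1: "set l \<subseteq> I \<Longrightarrow> i \<in> set l \<Longrightarrow> Dword l = Dword (i # remove1 i l)"
proof (induction l)
  case Nil then show ?case by simp
next
  case (Cons j l0)
  show ?case
  proof (cases "j = i")
    case True then show ?thesis by simp
  next
    case False
    then have il0: "i \<in> set l0" using Cons.prems by simp
    have l0: "set l0 \<subseteq> I" using Cons.prems by simp
    have "Dword (j # l0) = Dword (j # i # remove1 i l0)"
      using Cons.IH[OF l0 il0] by simp
    also have "\<dots> = Dword (i # j # remove1 i l0)"
      by (rule Dword_swap) (use Cons.prems il0 l0 set_remove1_subset[of i l0] in auto)
    also have "\<dots> = Dword (i # remove1 i (j # l0))" using False by simp
    finally show ?thesis .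
  qed
qed

lemma Dword_perm: "set l \<subseteq> I \<Longrightarrow> mset l = mset l' \<Longrightarrow> Dword l = Dword l'"
proof (induction l arbitrary: l')
  case Nil then show ?case by simp
next
  case (Cons i l)
  have il': "i \<in> set l'" using Cons.prems(2) by (metis list.set_intros(1) mset_eq_setD)
  have sl': "set l' \<subseteq> I" using Cons.prems by (metis mset_eq_setD)
  have "Dword l' = Dword (i # remove1 i l')" by (rule Dword_remove1[OF sl' il'])
  moreover have "mset l = mset (remove1 i l')" using Cons.prems(2)[symmetric] by simp
  then have "Dword l = Dword (remove1 i l')" using Cons.IH Cons.prems(1) by simp
  ultimately show ?case by simp
qed

lemma Dword_replicate_nonzero_imp: "i \<in> I \<Longrightarrow> Dword (replicate n i) m \<noteq> 0 \<Longrightarrow> \<exists>k\<le>n. m = (of_nat k * pinv i, of_nat (n - k) * pinv i)"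
proof (induction n arbitrary: m)
  case 0 then show ?case by (auto simp: Bbas_def split: if_splits)
next
  case (Suc n)
  from Suc.prems(2) have "Dword (replicate n i) (fst m - pinv i, snd m) \<noteq> 0 \<or> Dword (replicate n i) (fst m, snd m - pinv i) \<noteq> 0"
    by auto
  then show ?case
  proof
    assume "Dword (replicate n i) (fst m - pinv i, snd m) \<noteq> 0"
    then obtain k where k: "k \<le> n" "(fst m - pinv i, snd m) = (of_nat k * pinv i, of_nat (n - k) * pinv i)"
      using Suc.IH Suc.prems(1) by blast
    then have "m = (of_nat (Suc k) * pinv i, of_nat (Suc n - Suc k) * pinv i)"
      by (cases m) (auto simp: algebra_simps)
    then show ?thesis using k by blast
  next
    assume "Dword (replicate n i) (fst m, snd m - pinv i) \<noteq> 0"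
    then obtain k where k: "k \<le> n" "(fst m, snd m - pinv i) = (of_nat k * pinv i, of_nat (n - k) * pinv i)"
      using Suc.IH Suc.prems(1) by blast
    then have "m = (of_nat k * pinv i, of_nat (Suc n - k) * pinv i)"
      by (cases m) (auto simp: algebra_simps Suc_diff_le)
    then show ?thesis using k(1) le_SucI by blast
  qed
qed

lemma chi_pinv_multiple: "i \<in> I \<Longrightarrow> \<chi> (pinv i * (of_nat k * pinv i)) = q i ^ k"
  using chi_pinv_wt[of i "replicate k i"] by (simp add: set_replicate_subset)

lemma Dword_replicate_eq_qbinom: "i \<in> I \<Longrightarrow> k \<le> n \<Longrightarrow> Dword (replicate n i) (of_nat k * pinv i, of_nat (n - k) * pinv i) = qbinom (q i) n k"
proof (induction n arbitrary: k)
  case 0 then show ?case by (simp add: Bbas_def)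
next
  case (Suc n)
  have i: "i \<in> I" using Suc.prems by simp
  have t1: "Dword (replicate n i) (of_nat k * pinv i - pinv i, of_nat (Suc n - k) * pinv i) = (if k = 0 then 0 else qbinom (q i) n (k - 1))"
  proof (cases k)
    case 0 then show ?thesis using pinv_pos[OF i] by (simp add: Dword_neg_fst set_replicate_subset[OF i])
  next
    case (Suc k')
    then have "of_nat k * pinv i - pinv i = of_nat k' * pinv i" "Suc n - k = n - k'"
      by (simp_all add: algebra_simps)
    then show ?thesis using Suc.IH[OF i, of k'] Suc.prems Suc by simp
  qed
  have t2: "Dword (replicate n i) (of_nat k * pinv i, of_nat (Suc n - k) * pinv i - pinv i) = qbinom (q i) n k"
  proof (cases "k = Suc n")
    case True then show ?thesis using pinv_pos[OF i] by (simp add: Dword_neg_snd set_replicate_subset[OF i] qbinom_eq_0_above)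
  next
    case False
    then have kn: "k \<le> n" using Suc.prems by simp
    then have "of_nat (Suc n - k) * pinv i - pinv i = of_nat (n - k) * pinv i"
      by (simp add: Suc_diff_le algebra_simps)
    then show ?thesis using Suc.IH[OF i kn] by simp
  qed
  show ?case using t1 t2 chi_pinv_multiple[OF i] by simp
qed

lemma Dword_block: "i \<in> I \<Longrightarrow> Dword (replicate (p i) i) = (\<lambda>m. Bbas 1 0 m + Bbas 0 1 m)"
proof
  fix m :: "rat \<times> rat"
  assume i: "i \<in> I"
  have pm: "of_nat (p i) * pinv i = 1" using p_mult_pinv[OF i] .
  have qv: "\<And>k. 0 < k \<Longrightarrow> k < p i \<Longrightarrow> qbinom (q i) (p i) k = 0"
    by (rule qbinom_root_of_unity_eq_0) (use q_pow_p[OF i] q_pow_ne_1[OF i] in auto)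
  show "Dword (replicate (p i) i) m = Bbas 1 0 m + Bbas 0 1 m"
  proof (cases "m = (1, 0)")
    case True
    then show ?thesis using Dword_replicate_eq_qbinom[OF i, of "p i" "p i"] pm by (simp add: Bbas_def qbinom_diag)
  next
    case F1: False
    show ?thesis
    proof (cases "m = (0, 1)")
      case True
      then show ?thesis using Dword_replicate_eq_qbinom[OF i, of 0 "p i"] pm by (simp add: Bbas_def qbinom_0_right)
    next
      case F2: False
      have "Dword (replicate (p i) i) m = 0"
      proof (rule ccontr)
        assume ne: "Dword (replicate (p i) i) m \<noteq> 0"
        then obtain k where k: "k \<le> p i" "m = (of_nat k * pinv i, of_nat (p i - k) * pinv i)"
          using Dword_replicate_nonzero_imp[OF i] by blast
        have "k \<noteq> 0"
        proof
          assume "k = 0" then have "m = (0, 1)" using k pm by simp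
          with F2 show False by simp
        qed
        moreover have "k \<noteq> p i"
        proof
          assume "k = p i" then have "m = (1, 0)" using k pm by simp
          with F1 show False by simp
        qed
        ultimately have "qbinom (q i) (p i) k = 0" using qv k by simp
        then show False using ne k Dword_replicate_eq_qbinom[OF i k(1)] by simp
      qed
      then show ?thesis using F1 F2 by (simp add: Bbas_def)
    qed
  qed
qed

definition cocycle :: "rat \<times> rat \<Rightarrow> rat \<times> rat \<Rightarrow> 'k" where
  "cocycle u v = \<chi> (snd u * fst v)"

lemma Dword_single: "i \<in> I \<Longrightarrow> Dword [i] m = Bbas (pinv i) 0 m + Bbas 0 (pinv i) m"
  using pinv_pos[of i] by (cases m) (auto simp: Bbas_def chi_0)

lemma supp_Dword_single: "i \<in> I \<Longrightarrow> supp (Dword [i]) \<subseteq> {(pinv i, 0), (0, pinv i)}"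
  by (auto simp: supp_def Dword_single Bbas_def split: if_splits)

lemma Dword_Cons_eq_tconv:
  assumes i: "i \<in> I" and l: "set l \<subseteq> I"
  shows "Dword (i # l) = tconv cocycle (Dword [i]) (Dword l)"
proof
  fix m :: "rat \<times> rat"
  obtain x y where m: "m = (x, y)" by (cases m)
  have ne: "(pinv i, 0) \<noteq> (0, pinv i)" using pinv_pos[OF i] by simp
  have "tconv cocycle (Dword [i]) (Dword l) m = (\<Sum>u\<in>{(pinv i, 0), (0, pinv i)}. Dword [i] u * Dword l (m - u) * cocycle u (m - u))"
    by (rule tconv_sum_left[OF _ supp_Dword_single[OF i] finite_supp_Dword]) simp
  also have "\<dots> = Dword l (x - pinv i, y) + \<chi> (pinv i * x) * Dword l (x, y - pinv i)"
    using ne pinv_pos[OF i] by (simp add: m Dword_single Bbas_def cocycle_def chi_0)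
  finally show "Dword (i # l) m = tconv cocycle (Dword [i]) (Dword l) m" by (simp add: m)
qed

lemma cocycle_identity:
  assumes "snd u \<in> Mon" "snd v \<in> Mon" "fst v \<in> Mon" "fst w \<in> Mon"
  shows "cocycle u v * cocycle (u + v) w = cocycle v w * cocycle u (v + w)"
proof -
  have "cocycle (u + v) w = \<chi> (snd u * fst w) * \<chi> (snd v * fst w)"
    unfolding cocycle_def using chi_add_left[OF Mon_in_G Mon_in_G] assms by simp
  moreover have "cocycle u (v + w) = \<chi> (snd u * fst v) * \<chi> (snd u * fst w)"
    unfolding cocycle_def using chi_add_right[OF Mon_in_G] assms by simp
  ultimately show ?thesis by (simp add: cocycle_def mult_ac)
qed

lemma supp_Dword_in_Mon: "set l \<subseteq> I \<Longrightarrow> u \<in> supp (Dword l) \<Longrightarrow> fst u \<in> Mon \<and> snd u \<in> Mon"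
  using Dword_nonzero_imp by (auto simp: supp_def)

lemma Dword_append: "set l1 \<subseteq> I \<Longrightarrow> set l2 \<subseteq> I \<Longrightarrow> Dword (l1 @ l2) = tconv cocycle (Dword l1) (Dword l2)"
proof (induction l1)
  case Nil
  have "cocycle (0, 0) v = 1" for v
    by (simp add: cocycle_def chi_0)
  then show ?case
    using tconv_Bbas_0_left[OF finite_supp_Dword, of cocycle l2] by simp
next
  case (Cons i l1)
  have i: "i \<in> I" and l1: "set l1 \<subseteq> I" using Cons.prems by auto
  have "Dword ((i # l1) @ l2) = tconv cocycle (Dword [i]) (Dword (l1 @ l2))"
    using Dword_Cons_eq_tconv[OF i] l1 Cons.prems by simp
  also have "\<dots> = tconv cocycle (Dword [i]) (tconv cocycle (Dword l1) (Dword l2))" using Cons.IH l1 Cons.prems by simp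
  also have "\<dots> = tconv cocycle (tconv cocycle (Dword [i]) (Dword l1)) (Dword l2)"
    by (rule tconv_assoc[symmetric, OF finite_supp_Dword finite_supp_Dword finite_supp_Dword], rule cocycle_identity)
       (use supp_Dword_in_Mon[of "[i]"] supp_Dword_in_Mon[OF l1] supp_Dword_in_Mon[of l2] i Cons.prems in auto)
  also have "\<dots> = tconv cocycle (Dword (i # l1)) (Dword l2)" using Dword_Cons_eq_tconv[OF i l1] by simp
  finally show ?case .
qed

lemma Dword_block_append_cong:
  assumes i: "i \<in> I" and j: "j \<in> I" and r: "set r \<subseteq> I" and r': "set r' \<subseteq> I"
    and eq: "Dword r = Dword r'"
  shows "Dword (replicate (p i) i @ r) = Dword (replicate (p j) j @ r')"
proof -
  have "Dword (replicate (p i) i @ r) = tconv cocycle (Dword (replicate (p i) i)) (Dword r)"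
    by (rule Dword_append[OF set_replicate_subset[OF i] r])
  also have "\<dots> = tconv cocycle (Dword (replicate (p j) j)) (Dword r')"
    by (simp only: Dword_block[OF i] Dword_block[OF j] eq)
  also have "\<dots> = Dword (replicate (p j) j @ r')"
    by (rule Dword_append[OF set_replicate_subset[OF j] r', symmetric])
  finally show ?thesis .
qed

lemma wt_eq_imp_block:
  assumes l: "set l \<subseteq> I" and l': "set l' \<subseteq> I" and eq: "wt l = wt l'"
    and i: "i \<in> set l" "i \<notin> set l'"
  obtains r where "set r \<subseteq> I" "mset l = mset (replicate (p i) i @ r)"
proof -
  have iI: "i \<in> I"
    using i l by blast
  have "count_list l' i = 0" "count_list l i \<noteq> 0"
    using i by (simp_all add: count_list_0_iff)
  then have "p i dvd count_list l i" "0 < count_list l i"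
    using p_dvd_count_list_diff[OF l l' eq iI] by simp_all
  then have "p i \<le> count_list l i"
    by (rule dvd_imp_le)
  from mset_split_replicate[OF this] obtain r where r: "mset l = mset (replicate (p i) i @ r)" ..
  have "set r \<subseteq> set l"
    by (simp add: mset_eq_setD[OF r])
  then have "set r \<subseteq> I"
    using l by (rule order_trans)
  then show ?thesis
    using r by (rule that)
qed

lemma Dword_eq_if_wt_eq: "set l \<subseteq> I \<Longrightarrow> set l' \<subseteq> I \<Longrightarrow> wt l = wt l' \<Longrightarrow> Dword l = Dword l'"
proof (induction "length l + length l'" arbitrary: l l' rule: less_induct)
  case less
  note l = less.prems(1) and l' = less.prems(2) and eq = less.prems(3)
  consider "l = [] \<or> l' = []" | i where "i \<in> set l" "i \<in> set l'"
    | "l \<noteq> []" "l' \<noteq> []" "set l \<inter> set l' = {}"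
    by blast
  then show ?case
  proof cases
    case 1
    then show ?thesis
      using eq wt_eq_0_iff[OF l] wt_eq_0_iff[OF l'] by auto
  next
    case (2 i)
    have "set (remove1 i l) \<subseteq> I" "set (remove1 i l') \<subseteq> I"
      using l l' set_remove1_subset by (metis order_trans)+
    moreover have "wt (remove1 i l) = wt (remove1 i l')"
      using wt_remove1[OF 2(1)] wt_remove1[OF 2(2)] eq by simp
    moreover have "length (remove1 i l) + length (remove1 i l') < length l + length l'"
    proof -
      have "length l \<ge> 1" "length l' \<ge> 1"
        using length_pos_if_in_set[OF 2(1)] length_pos_if_in_set[OF 2(2)] by linarith+
      then show ?thesis
        using 2 by (simp add: length_remove1)
    qed
    ultimately have "Dword (remove1 i l) = Dword (remove1 i l')"
      using less.hyps by blast
    then show ?thesis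
      using Dword_remove1[OF l 2(1)] Dword_remove1[OF l' 2(2)] by simp
  next
    case 3
    define i j where "i = hd l" and "j = hd l'"
    have i: "i \<in> set l" "i \<notin> set l'" and j: "j \<in> set l'" "j \<notin> set l"
      using 3 hd_in_set[of l] hd_in_set[of l'] unfolding i_def j_def by blast+
    obtain r where r: "set r \<subseteq> I" "mset l = mset (replicate (p i) i @ r)"
      by (rule wt_eq_imp_block[OF l l' eq i])
    obtain r' where r': "set r' \<subseteq> I" "mset l' = mset (replicate (p j) j @ r')"
      by (rule wt_eq_imp_block[OF l' l eq[symmetric] j])
    have ij: "i \<in> I" "j \<in> I"
      using i j l l' by auto
    have "wt r = wt r'"
      using wt_mset[OF r(2)] wt_mset[OF r'(2)] p_mult_pinv[OF ij(1)] p_mult_pinv[OF ij(2)] eq by simp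
    moreover have "p i > 0" "p j > 0"
      using p_ge_2 ij by force+
    then have "length r + length r' < length l + length l'"
      using mset_eq_length[OF r(2)] mset_eq_length[OF r'(2)] by simp
    ultimately have "Dword r = Dword r'"
      using less.hyps[OF _ r(1) r'(1)] by blast
    then show ?thesis
      using Dword_perm[OF l r(2)] Dword_perm[OF l' r'(2)] Dword_block_append_cong[OF ij r(1) r'(1)] by simp
  qed
qed

text \<open>By \<open>Dword_eq_if_wt_eq\<close> any word of weight \<open>b\<close> may be chosen; for \<open>b \<notin> Mon\<close>
  the value is junk.\<close>

definition Dcoef :: "rat \<Rightarrow> rat \<times> rat \<Rightarrow> 'k" where
  "Dcoef b = Dword (SOME l. set l \<subseteq> I \<and> wt l = b)"

lemma Dcoef_wt: "set l \<subseteq> I \<Longrightarrow> Dcoef (wt l) = Dword l"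
proof -
  assume l: "set l \<subseteq> I"
  have "\<exists>l'. set l' \<subseteq> I \<and> wt l' = wt l" using l by blast
  then have "set (SOME l'. set l' \<subseteq> I \<and> wt l' = wt l) \<subseteq> I \<and> wt (SOME l'. set l' \<subseteq> I \<and> wt l' = wt l) = wt l"
    by (rule someI_ex)
  then show ?thesis unfolding Dcoef_def using Dword_eq_if_wt_eq l by blast
qed

lemma Dcoef_Mon: "b \<in> Mon \<Longrightarrow> \<exists>l. set l \<subseteq> I \<and> b = wt l \<and> Dcoef b = Dword l"
  using Dcoef_wt by (auto simp: Mon_def)

lemma finite_supp_Dcoef: "b \<in> Mon \<Longrightarrow> finite (supp (Dcoef b))"
  using Dcoef_Mon finite_supp_Dword by metis

lemma Dcoef_nonzero_imp: "b \<in> Mon \<Longrightarrow> Dcoef b m \<noteq> 0 \<Longrightarrow> fst m \<in> Mon \<and> snd m \<in> Mon \<and> fst m + snd m = b"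
  using Dcoef_Mon Dword_nonzero_imp by metis

lemma Dcoef_top: "b \<in> Mon \<Longrightarrow> Dcoef b (b, 0) = 1"
  using Dcoef_Mon Dword_top by metis

lemma Dcoef_bot: "b \<in> Mon \<Longrightarrow> Dcoef b (0, b) = 1"
  using Dcoef_Mon Dword_bot by metis

lemma Dcoef_add: "b \<in> Mon \<Longrightarrow> b' \<in> Mon \<Longrightarrow> tconv cocycle (Dcoef b) (Dcoef b') = Dcoef (b + b')"
proof -
  assume "b \<in> Mon" "b' \<in> Mon"
  then obtain l l' where "set l \<subseteq> I" "set l' \<subseteq> I" "b = wt l" "b' = wt l'" by (auto simp: Mon_def)
  then show ?thesis using Dword_append Dcoef_wt[of "l @ l'"] Dcoef_wt[of l] Dcoef_wt[of l'] by simp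
qed

lemma Dcoef_0: "Dcoef 0 = Bbas 0 0"
  using Dcoef_wt[of "[]"] by simp

lemma Dcoef_pinv: "i \<in> I \<Longrightarrow> Dcoef (pinv i) = Dword [i]"
  using Dcoef_wt[of "[i]"] by simp

lemma supp_Dcoef_in_Mon: "b \<in> Mon \<Longrightarrow> u \<in> supp (Dcoef b) \<Longrightarrow> fst u \<in> Mon \<and> snd u \<in> Mon"
  using Dcoef_nonzero_imp by (auto simp: supp_def)

lemma Dword_corner: "i \<in> I \<Longrightarrow> set l \<subseteq> I \<Longrightarrow> Dword l (wt l - pinv i, pinv i) = (\<Sum>t<count_list l i. q i ^ t)"
proof (induction l)
  case Nil then show ?case using pinv_pos[of i] by (simp add: Bbas_def)
next
  case (Cons j l)
  have j: "j \<in> I" and l: "set l \<subseteq> I" using Cons.prems by auto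
  have e1: "pinv j + wt l - pinv i - pinv j = wt l - pinv i" by simp
  show ?case
  proof (cases "j = i")
    case True
    have "Dword (j # l) (wt (j # l) - pinv i, pinv i) = Dword l (wt l - pinv i, pinv i) + \<chi> (pinv i * wt l) * Dword l (wt l, 0)"
      using True by simp
    also have "\<dots> = (\<Sum>t<count_list l i. q i ^ t) + q i ^ count_list l i"
      using Cons.IH[OF Cons.prems(1) l] chi_pinv_wt[OF Cons.prems(1) l] Dword_top[OF l] by simp
    finally show ?thesis using True by simp
  next
    case False
    have "Dword l (pinv j + wt l - pinv i, pinv i - pinv j) = 0"
    proof (rule ccontr)
      assume "Dword l (pinv j + wt l - pinv i, pinv i - pinv j) \<noteq> 0"
      then have "pinv i - pinv j \<in> Mon" using Dword_nonzero_imp[OF l] by fastforce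
      then show False using pinv_diff_notin_Mon[OF Cons.prems(1) j] False by auto
    qed
    then have "Dword (j # l) (wt (j # l) - pinv i, pinv i) = Dword l (wt l - pinv i, pinv i)"
      by simp
    then show ?thesis using Cons.IH[OF Cons.prems(1) l] False by simp
  qed
qed

lemma q_geometric_sum_ne_0: "i \<in> I \<Longrightarrow> \<not> p i dvd n \<Longrightarrow> (\<Sum>t<n. q i ^ t) \<noteq> 0"
proof
  assume i: "i \<in> I" and nd: "\<not> p i dvd n" and z: "(\<Sum>t<n. q i ^ t) = 0"
  have "1 - q i ^ n = (1 - q i) * (\<Sum>t<n. q i ^ t)" by (rule one_diff_power_eq)
  then have "q i ^ n = 1" using z by simp
  then have "q i ^ (n mod p i) = 1" using q_pow_mod[OF i] by simp
  moreover have "0 < n mod p i" using nd by (simp add: mod_greater_zero_iff_not_dvd)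
  moreover have "n mod p i < p i" using p_ge_2 i by (metis mod_less_divisor not_numeral_le_zero not_gr_zero)
  ultimately show False using q_pow_ne_1[OF i] by blast
qed

definition block_word :: "'i \<Rightarrow> nat \<Rightarrow> 'i list" where "block_word i m = concat (replicate m (replicate (p i) i))"

lemma set_block_word: "i \<in> I \<Longrightarrow> set (block_word i m) \<subseteq> I" by (auto simp: block_word_def)
lemma wt_block_word: "i \<in> I \<Longrightarrow> wt (block_word i m) = of_nat m"
  unfolding block_word_def wt_concat using p_mult_pinv[of i] by (simp add: sum_list_replicate)

lemma Dword_block_append:
  assumes i: "i \<in> I" and r: "set r \<subseteq> I"
  shows "Dword (replicate (p i) i @ r) (x, y) = Dword r (x - 1, y) + \<chi> x * Dword r (x, y - 1)"
proof -
  have sY: "supp (Dword (replicate (p i) i)) \<subseteq> {(1,0), (0,1)}"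
    using Dword_block[OF i] by (auto simp: supp_def Bbas_def split: if_splits)
  have "Dword (replicate (p i) i @ r) (x, y) = tconv cocycle (Dword (replicate (p i) i)) (Dword r) (x, y)"
    using Dword_append[OF set_replicate_subset[OF i] r] by simp
  also have "\<dots> = (\<Sum>u\<in>{(1,0), (0,1)}. Dword (replicate (p i) i) u * Dword r ((x, y) - u) * cocycle u ((x, y) - u))"
    by (rule tconv_sum_left[OF _ sY finite_supp_Dword]) simp
  also have "\<dots> = Dword r (x - 1, y) + \<chi> x * Dword r (x, y - 1)"
    using Dword_block[OF i] by (simp add: Bbas_def cocycle_def chi_0)
  finally show ?thesis .
qed

lemma Dword_block_word_coeff: "i \<in> I \<Longrightarrow> Dword (block_word i (Suc m)) (of_nat m, 1) = of_nat (Suc m)"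
proof (induction m)
  case 0
  then show ?case using Dword_block[of i] by (simp add: block_word_def Bbas_def)
next
  case (Suc m)
  have i: "i \<in> I" using Suc.prems .
  have LS: "block_word i (Suc (Suc m)) = replicate (p i) i @ block_word i (Suc m)" by (simp add: block_word_def)
  have "Dword (block_word i (Suc (Suc m))) (of_nat (Suc m), 1) =
      Dword (block_word i (Suc m)) (of_nat m, 1) + \<chi> (of_nat (Suc m)) * Dword (block_word i (Suc m)) (of_nat (Suc m), 0)"
    unfolding LS using Dword_block_append[OF i set_block_word[OF i]] by simp
  also have "\<chi> (of_nat (Suc m)) = 1" using chi_wt[OF set_block_word[OF i], of "Suc m"] wt_block_word[OF i] by simp
  also have "Dword (block_word i (Suc m)) (of_nat (Suc m), 0) = 1" using Dword_top[OF set_block_word[OF i], of "Suc m"] wt_block_word[OF i] by simp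
  finally show ?case using Suc.IH[OF i] by simp
qed

lemma wt_eq_of_nat_if_p_dvd_count_list:
  assumes l: "set l \<subseteq> I" and dvd: "\<forall>i\<in>set l. p i dvd count_list l i"
  shows "wt l = of_nat (\<Sum>i\<in>set l. count_list l i div p i)"
proof -
  have "of_nat (count_list l i) * pinv i = of_nat (count_list l i div p i)" if i: "i \<in> set l" for i
  proof -
    have "of_nat (count_list l i) * pinv i = of_nat (count_list l i div p i) * (of_nat (p i) * pinv i)"
      using dvd i by (simp flip: of_nat_mult add: mult.assoc)
    then show ?thesis
      using p_mult_pinv[of i] i l by auto
  qed
  then show ?thesis
    using wt_eq_sum_count_list[OF order_refl] by simp
qed

lemma Dcoef_of_nat:
  assumes i: "i \<in> I"
  shows "Dcoef (of_nat (Suc m)) (of_nat m, 1) = of_nat (Suc m)"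
  using Dcoef_wt[OF set_block_word[OF i], of "Suc m"] wt_block_word[OF i] Dword_block_word_coeff[OF i]
  by simp

lemma Dcoef_inner_nonzero:
  assumes b: "b \<in> Mon" and b0: "b \<noteq> 0" and b1: "b \<noteq> 1" and bp: "\<forall>i\<in>I. b \<noteq> pinv i"
  shows "\<exists>b\<^sub>1 b\<^sub>2. b\<^sub>1 \<noteq> 0 \<and> b\<^sub>2 \<noteq> 0 \<and> Dcoef b (b\<^sub>1, b\<^sub>2) \<noteq> 0"
proof -
  obtain l where l: "set l \<subseteq> I" "b = wt l"
    using b by (auto simp: Mon_def)
  show ?thesis
  proof (cases "\<exists>i\<in>set l. \<not> p i dvd count_list l i")
    case True
    then obtain i where i: "i \<in> set l" "\<not> p i dvd count_list l i"
      by blast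
    then have iI: "i \<in> I"
      using l by auto
    have "Dcoef b (wt l - pinv i, pinv i) \<noteq> 0"
      using Dcoef_wt[OF l(1)] Dword_corner[OF iI l(1)] q_geometric_sum_ne_0[OF iI i(2)] l(2) by simp
    moreover have "wt l - pinv i \<noteq> 0" "pinv i \<noteq> 0"
      using bp iI l pinv_pos[OF iI] by auto
    ultimately show ?thesis
      by blast
  next
    case False
    then obtain N where N: "b = of_nat N"
      using wt_eq_of_nat_if_p_dvd_count_list[OF l(1)] l(2) by blast
    then obtain m where m: "N = Suc m" "m \<noteq> 0"
      using b0 b1 by (cases N) auto
    obtain i where "i \<in> set l"
      using l b0 by (cases l) auto
    then have "Dcoef b (of_nat m, 1) = of_nat (Suc m)"
      using Dcoef_of_nat[of i m] l N m by auto
    then have "Dcoef b (of_nat m, 1) \<noteq> 0"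
      by (simp del: of_nat_Suc) \<comment> \<open>the only use of characteristic \<open>0\<close>\<close>
    moreover have "(of_nat m :: rat) \<noteq> 0"
      using m by simp
    ultimately show ?thesis
      by (intro exI[of _ "of_nat m"] exI[of _ 1]) simp
  qed
qed

section \<open>The comultiplication\<close>

lemma Bmul_eq_tconv: "Bmul \<chi> = tconv cocycle"
  unfolding Bmul_def tconv_def cocycle_def by (intro ext) (simp add: prod_eq_iff)

definition tcocycle :: "(rat \<times> rat) \<times> (rat \<times> rat) \<Rightarrow> (rat \<times> rat) \<times> (rat \<times> rat) \<Rightarrow> 'k" where
  "tcocycle U V = cocycle (fst U) (fst V) * cocycle (snd U) (snd V)"

lemma Tmul_eq_tconv: "Tmul \<chi> = tconv tcocycle"
  unfolding Tmul_def tconv_def tcocycle_def cocycle_def by (intro ext) (simp add: prod_eq_iff mult.assoc)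

lemma Bcar_iff: "f \<in> Bcar G I p \<longleftrightarrow> finite (supp f) \<and> (\<forall>m\<in>supp f. fst m \<in> Mon \<and> snd m \<in> G)"
  by (auto simp: Bcar_def supp_def Mset_eq_Mon)

lemma Bbas_in_Bcar: "b \<in> Mon \<Longrightarrow> a \<in> G \<Longrightarrow> Bbas b a \<in> Bcar G I p"
  unfolding Bcar_iff by (auto simp: supp_def Bbas_def)

lemma Xel_in_Bcar: "a \<in> G \<Longrightarrow> Xel a \<in> Bcar G I p"
  unfolding Xel_def by (rule Bbas_in_Bcar[OF zero_in_Mon])

lemma Yel_eq_Bbas: "Yel p i = Bbas (pinv i) 0"
  by (simp add: Yel_def pinv_def)

lemma addB_in_Bcar: "f \<in> Bcar G I p \<Longrightarrow> g \<in> Bcar G I p \<Longrightarrow> addB f g \<in> Bcar G I p"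
  using finite_subset[of "supp (addB f g)" "supp f \<union> supp g"]
  unfolding Bcar_iff by (fastforce simp: supp_def addB_def)

lemma smulB_in_Bcar: "f \<in> Bcar G I p \<Longrightarrow> smulB c f \<in> Bcar G I p"
  unfolding Bcar_iff by (auto simp: supp_def smulB_def intro: finite_subset[of _ "supp f"])

lemma Bmul_in_Bcar:
  assumes f: "f \<in> Bcar G I p" and g: "g \<in> Bcar G I p"
  shows "Bmul \<chi> f g \<in> Bcar G I p"
proof -
  have s: "supp (Bmul \<chi> f g) \<subseteq> (\<lambda>(u, v). u + v) ` (supp f \<times> supp g)"
    unfolding Bmul_eq_tconv by (rule supp_tconv)
  have "finite (supp (Bmul \<chi> f g))"
    using f g by (intro finite_subset[OF s]) (simp add: Bcar_iff)
  moreover have "fst m \<in> Mon \<and> snd m \<in> G" if m: "m \<in> supp (Bmul \<chi> f g)" for m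
  proof -
    obtain u v where "u \<in> supp f" "v \<in> supp g" "m = u + v"
      using s m by auto
    then show ?thesis
      using f g by (auto simp: Bcar_iff intro: add_in_Mon add_in_G)
  qed
  ultimately show ?thesis
    unfolding Bcar_iff by blast
qed

lemma Bmul_Bbas: "Bmul \<chi> (Bbas b 0) (Bbas b' a') = Bbas (b + b') a'"
  unfolding Bmul_eq_tconv
  using tconv_Bbas[of cocycle "(b, 0)" "(b', a')"] by (auto simp: Bbas_def cocycle_def chi_0)

text \<open>\<open>lift a c\<close> is \<open>\<Sum> c(b1, b2) y^b1 x^(b2 + a) \<otimes> y^b2 x^a\<close>; with \<open>c = Dcoef b\<close> it is
  \<open>\<Delta>(y^b x^a) = \<Delta>(y^b) (x^a \<otimes> x^a)\<close>.\<close>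

definition lift :: "rat \<Rightarrow> (rat \<times> rat \<Rightarrow> 'k) \<Rightarrow> (rat \<times> rat) \<times> (rat \<times> rat) \<Rightarrow> 'k" where
  "lift a c M = (if snd (snd M) = a \<and> snd (fst M) = fst (snd M) + a then c (fst (fst M), fst (snd M)) else 0)"

definition lift_index :: "rat \<Rightarrow> rat \<times> rat \<Rightarrow> (rat \<times> rat) \<times> (rat \<times> rat)" where
  "lift_index a e = ((fst e, snd e + a), (snd e, a))"

lemma lift_lift_index: "lift a c (lift_index a e) = c e"
  by (simp add: lift_def lift_index_def)

lemma inj_lift_index: "inj (lift_index a)"
  by (auto simp: inj_def lift_index_def prod_eq_iff)

lemma supp_lift: "supp (lift a c) \<subseteq> lift_index a ` supp c"
proof
  fix M assume "M \<in> supp (lift a c)"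
  then have "snd (snd M) = a" "snd (fst M) = fst (snd M) + a" "c (fst (fst M), fst (snd M)) \<noteq> 0"
    by (auto simp: supp_def lift_def split: if_splits)
  then show "M \<in> lift_index a ` supp c"
    by (auto simp: supp_def lift_index_def prod_eq_iff intro!: image_eqI[of _ _ "(fst (fst M), fst (snd M))"])
qed

lemma finite_supp_lift: "finite (supp c) \<Longrightarrow> finite (supp (lift a c))"
  using supp_lift finite_subset by blast

lemma lift_scale: "lift a (\<lambda>m. K * c m) M = K * lift a c M"
  by (simp add: lift_def)

lemma lift_Bbas_0: "lift a (Bbas 0 0) = tens (Xel a) (Xel a)"
  by (auto simp: lift_def tens_def Xel_def Bbas_def prod_eq_iff fun_eq_iff)

lemma lift_Dword_single:
  "i \<in> I \<Longrightarrow> lift 0 (Dword [i]) = addB (tens (Yel p i) (Xel 0)) (tens (Xel (pinv i)) (Yel p i))"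
  using pinv_pos[of i]
  by (auto simp: fun_eq_iff lift_def tens_def Xel_def Yel_eq_Bbas Bbas_def addB_def prod_eq_iff chi_0)

lemma lift_index_add_eq_iff:
  "lift_index a e + lift_index a' f = M \<longleftrightarrow>
     snd (snd M) = a + a' \<and> snd (fst M) = fst (snd M) + (a + a') \<and> e + f = (fst (fst M), fst (snd M))"
  by (cases M) (auto simp: lift_index_def prod_eq_iff)

text \<open>Multiplying lifts twists the inner convolution by the \<open>x^a\<close> of the left factor.\<close>

lemma tconv_lift:
  assumes fc: "finite (supp c)" and fc': "finite (supp c')"
  shows "tconv tcocycle (lift a c) (lift a' c') =
    lift (a + a') (tconv (\<lambda>e f. \<chi> ((snd e + a) * fst f) * \<chi> (a * snd f)) c c')"
proof
  fix M :: "(rat \<times> rat) \<times> (rat \<times> rat)"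
  let ?s = "\<lambda>e f. \<chi> ((snd e + a) * fst f) * \<chi> (a * snd f)"
  let ?N = "(fst (fst M), fst (snd M))"
  have "tconv tcocycle (lift a c) (lift a' c') M =
      (\<Sum>x\<in>lift_index a ` supp c. \<Sum>y\<in>lift_index a' ` supp c'.
         if x + y = M then lift a c x * lift a' c' y * tcocycle x y else 0)"
    by (rule tconv_double_sum) (use fc fc' supp_lift in auto)
  also have "\<dots> = (\<Sum>e\<in>supp c. \<Sum>f\<in>supp c'. if lift_index a e + lift_index a' f = M
      then lift a c (lift_index a e) * lift a' c' (lift_index a' f) * tcocycle (lift_index a e) (lift_index a' f) else 0)"
    by (simp add: sum.reindex inj_on_subset[OF inj_lift_index])
  also have "\<dots> = (\<Sum>e\<in>supp c. \<Sum>f\<in>supp c'. if lift_index a e + lift_index a' f = M then c e * c' f * ?s e f else 0)"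
  proof -
    have "tcocycle (lift_index a e) (lift_index a' f) = ?s e f" for e f
      by (simp add: tcocycle_def cocycle_def lift_index_def)
    then show ?thesis
      by (simp only: lift_lift_index)
  qed
  also have "\<dots> = lift (a + a') (tconv ?s c c') M"
  proof (cases "snd (snd M) = a + a' \<and> snd (fst M) = fst (snd M) + (a + a')")
    case True
    then have "lift (a + a') (tconv ?s c c') M = tconv ?s c c' ?N"
      by (simp add: lift_def)
    also have "\<dots> = (\<Sum>e\<in>supp c. \<Sum>f\<in>supp c'. if e + f = ?N then c e * c' f * ?s e f else 0)"
      by (rule tconv_double_sum[OF fc fc']) auto
    finally show ?thesis
      using True by (simp only: lift_index_add_eq_iff simp_thms)
  next
    case False
    then have "lift_index a e + lift_index a' f \<noteq> M" for e f
      unfolding lift_index_add_eq_iff by blast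
    with False show ?thesis
      by (auto simp: lift_def)
  qed
  finally show "tconv tcocycle (lift a c) (lift a' c') M = lift (a + a') (tconv ?s c c') M" .
qed

lemma tconv_lift_0:
  "finite (supp c) \<Longrightarrow> finite (supp c') \<Longrightarrow> tconv tcocycle (lift 0 c) (lift a' c') = lift a' (tconv cocycle c c')"
  using tconv_lift[of c c' 0 a'] by (simp add: chi_0 cocycle_def[abs_def])

lemma tconv_twist_Mon:
  assumes a: "a \<in> G" and c: "\<And>e. e \<in> supp c \<Longrightarrow> snd e \<in> Mon"
    and c': "\<And>f. f \<in> supp c' \<Longrightarrow> fst f \<in> Mon \<and> snd f \<in> Mon \<and> fst f + snd f = b'"
  shows "tconv (\<lambda>e f. \<chi> ((snd e + a) * fst f) * \<chi> (a * snd f)) c c' m = \<chi> (a * b') * tconv cocycle c c' m"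
proof (rule tconv_scale_cocycle)
  fix e f assume e: "e \<in> supp c" and f: "f \<in> supp c'"
  have "\<chi> ((snd e + a) * fst f) = \<chi> (snd e * fst f) * \<chi> (a * fst f)"
    using chi_add_left[OF Mon_in_G[OF c[OF e]] a] c'[OF f] by simp
  moreover have "\<chi> (a * b') = \<chi> (a * fst f) * \<chi> (a * snd f)"
    using chi_add_right[OF a] c'[OF f] by force
  ultimately show "\<chi> ((snd e + a) * fst f) * \<chi> (a * snd f) = \<chi> (a * b') * cocycle e f"
    by (simp add: cocycle_def mult_ac)
qed

definition Dbasis :: "rat \<times> rat \<Rightarrow> (rat \<times> rat) \<times> (rat \<times> rat) \<Rightarrow> 'k" where
  "Dbasis m = lift (snd m) (Dcoef (fst m))"

lemma finite_supp_Dbasis: "b \<in> Mon \<Longrightarrow> finite (supp (Dbasis (b, a)))"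
  unfolding Dbasis_def by (simp add: finite_supp_lift finite_supp_Dcoef)

lemma Dbasis_Xel: "Dbasis (0, a) = tens (Xel a) (Xel a)"
  unfolding Dbasis_def by (simp add: Dcoef_0 lift_Bbas_0)

lemma Dbasis_Yel:
  assumes i: "i \<in> I"
  shows "Dbasis (pinv i, 0) = addB (tens (Yel p i) (Xel 0)) (tens (Xel (pinv i)) (Yel p i))"
  unfolding Dbasis_def fst_conv snd_conv Dcoef_pinv[OF i] by (rule lift_Dword_single[OF i])

lemma tconv_Dbasis:
  assumes b: "b \<in> Mon" and b': "b' \<in> Mon" and a: "a \<in> G"
  shows "tconv tcocycle (Dbasis (b, a)) (Dbasis (b', a')) M = \<chi> (a * b') * Dbasis (b + b', a + a') M"
proof -
  let ?s = "\<lambda>e f. \<chi> ((snd e + a) * fst f) * \<chi> (a * snd f)"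
  have "tconv ?s (Dcoef b) (Dcoef b') = (\<lambda>m. \<chi> (a * b') * Dcoef (b + b') m)"
    using tconv_twist_Mon[OF a] supp_Dcoef_in_Mon[OF b] Dcoef_nonzero_imp[OF b'] Dcoef_add[OF b b']
    by (auto simp: supp_def)
  then have "tconv tcocycle (Dbasis (b, a)) (Dbasis (b', a')) = lift (a + a') (\<lambda>m. \<chi> (a * b') * Dcoef (b + b') m)"
    unfolding Dbasis_def by (simp add: tconv_lift finite_supp_Dcoef b b')
  then show ?thesis
    by (simp add: Dbasis_def lift_scale)
qed

definition Dlin :: "(rat \<times> rat \<Rightarrow> 'k) \<Rightarrow> (rat \<times> rat) \<times> (rat \<times> rat) \<Rightarrow> 'k" where
  "Dlin f = (if f \<in> Bcar G I p then (\<lambda>M. \<Sum>m\<in>supp f. f m * Dbasis m M) else (\<lambda>_. 0))"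

lemma Dlin_eq_sum:
  "f \<in> Bcar G I p \<Longrightarrow> finite S \<Longrightarrow> supp f \<subseteq> S \<Longrightarrow> Dlin f M = (\<Sum>m\<in>S. f m * Dbasis m M)"
  unfolding Dlin_def by (auto intro!: sum.mono_neutral_left simp: supp_def)

lemma Dlin_addB:
  assumes f: "f \<in> Bcar G I p" and g: "g \<in> Bcar G I p"
  shows "Dlin (addB f g) = addB (Dlin f) (Dlin g)"
proof
  fix M
  let ?S = "supp f \<union> supp g"
  have fS: "finite ?S"
    using f g by (simp add: Bcar_iff)
  have "Dlin (addB f g) M = (\<Sum>m\<in>?S. addB f g m * Dbasis m M)"
    by (rule Dlin_eq_sum[OF addB_in_Bcar[OF f g] fS]) (auto simp: supp_def addB_def)
  also have "\<dots> = Dlin f M + Dlin g M"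
    using Dlin_eq_sum[OF f fS] Dlin_eq_sum[OF g fS] by (simp add: addB_def distrib_right sum.distrib)
  finally show "Dlin (addB f g) M = addB (Dlin f) (Dlin g) M"
    by (simp add: addB_def)
qed

lemma Dlin_smulB:
  assumes f: "f \<in> Bcar G I p"
  shows "Dlin (smulB c f) = smulB c (Dlin f)"
proof
  fix M
  have fS: "finite (supp f)"
    using f by (simp add: Bcar_iff)
  have "Dlin (smulB c f) M = (\<Sum>m\<in>supp f. smulB c f m * Dbasis m M)"
    by (rule Dlin_eq_sum[OF smulB_in_Bcar[OF f] fS]) (auto simp: supp_def smulB_def)
  then show "Dlin (smulB c f) M = smulB c (Dlin f) M"
    using Dlin_eq_sum[OF f fS order_refl] by (simp add: smulB_def sum_distrib_left mult.assoc)
qed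

lemma Dlin_Bmul_expand:
  assumes f: "f \<in> Bcar G I p" and g: "g \<in> Bcar G I p"
  shows "Dlin (Bmul \<chi> f g) M = (\<Sum>u\<in>supp f. \<Sum>v\<in>supp g. f u * g v * cocycle u v * Dbasis (u + v) M)"
proof -
  let ?Z = "(\<lambda>(u, v). u + v) ` (supp f \<times> supp g)"
  let ?t = "\<lambda>u v m. if u + v = m then f u * g v * cocycle u v * Dbasis m M else 0"
  have ff: "finite (supp f)" and fg: "finite (supp g)"
    using f g by (simp_all add: Bcar_iff)
  then have fZ: "finite ?Z"
    by simp
  have "Dlin (Bmul \<chi> f g) M = (\<Sum>m\<in>?Z. Bmul \<chi> f g m * Dbasis m M)"
    by (rule Dlin_eq_sum[OF Bmul_in_Bcar[OF f g] fZ]) (unfold Bmul_eq_tconv, rule supp_tconv)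
  also have "\<dots> = (\<Sum>m\<in>?Z. (\<Sum>u\<in>supp f. \<Sum>v\<in>supp g. if u + v = m then f u * g v * cocycle u v else 0) * Dbasis m M)"
    unfolding Bmul_eq_tconv by (intro sum.cong refl, subst tconv_double_sum[OF ff fg]) auto
  also have "\<dots> = (\<Sum>m\<in>?Z. \<Sum>u\<in>supp f. \<Sum>v\<in>supp g. ?t u v m)"
    by (intro sum.cong refl) (auto simp: sum_distrib_right intro!: sum.cong)
  also have "\<dots> = (\<Sum>u\<in>supp f. \<Sum>v\<in>supp g. \<Sum>m\<in>?Z. ?t u v m)"
    by (subst sum.swap) (rule sum.cong[OF refl], rule sum.swap)
  also have "\<dots> = (\<Sum>u\<in>supp f. \<Sum>v\<in>supp g. f u * g v * cocycle u v * Dbasis (u + v) M)"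
    using fZ by (intro sum.cong refl) force
  finally show ?thesis .
qed

lemma Dlin_Bmul:
  assumes f: "f \<in> Bcar G I p" and g: "g \<in> Bcar G I p"
  shows "Dlin (Bmul \<chi> f g) = Tmul \<chi> (Dlin f) (Dlin g)"
proof
  fix M
  have ff: "finite (supp f)" and fg: "finite (supp g)"
    and Mf: "\<And>u. u \<in> supp f \<Longrightarrow> fst u \<in> Mon \<and> snd u \<in> G"
    and Mg: "\<And>v. v \<in> supp g \<Longrightarrow> fst v \<in> Mon \<and> snd v \<in> G"
    using f g by (simp_all add: Bcar_iff)
  have fin: "finite (supp (\<lambda>x. c * Dbasis u x))" if "fst u \<in> Mon" for c u
    using finite_supp_Dbasis[OF that, of "snd u"] by (auto simp: supp_def intro: finite_subset)
  have "f u * g v * cocycle u v * Dbasis (u + v) M = tconv tcocycle (\<lambda>x. f u * Dbasis u x) (\<lambda>y. g v * Dbasis v y) M"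
    if "u \<in> supp f" "v \<in> supp g" for u v
    using tconv_Dbasis[of "fst u" "fst v" "snd u" "snd v" M] Mf[OF that(1)] Mg[OF that(2)]
    by (simp add: tconv_smult cocycle_def plus_prod_def)
  then have "Dlin (Bmul \<chi> f g) M = (\<Sum>u\<in>supp f. \<Sum>v\<in>supp g. tconv tcocycle (\<lambda>x. f u * Dbasis u x) (\<lambda>y. g v * Dbasis v y) M)"
    unfolding Dlin_Bmul_expand[OF f g] by simp
  also have "\<dots> = tconv tcocycle (\<lambda>x. \<Sum>u\<in>supp f. f u * Dbasis u x) (\<lambda>y. \<Sum>v\<in>supp g. g v * Dbasis v y) M"
    using Mf Mg fin by (intro tconv_sum[symmetric, OF ff fg]) auto
  also have "\<dots> = Tmul \<chi> (Dlin f) (Dlin g) M"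
    using f g by (simp add: Tmul_eq_tconv Dlin_def)
  finally show "Dlin (Bmul \<chi> f g) M = Tmul \<chi> (Dlin f) (Dlin g) M" .
qed

lemma Dlin_Xel:
  assumes a: "a \<in> G"
  shows "Dlin (Xel a) = tens (Xel a) (Xel a)"
proof
  fix M
  have "Dlin (Xel a) M = (\<Sum>m\<in>{(0, a)}. Xel a m * Dbasis m M)"
    by (rule Dlin_eq_sum[OF Xel_in_Bcar[OF a]]) (auto simp: Xel_def supp_Bbas)
  then show "Dlin (Xel a) M = tens (Xel a) (Xel a) M"
    by (simp add: Xel_def Bbas_def Dbasis_Xel[unfolded Xel_def])
qed

lemma Dlin_Yel:
  assumes i: "i \<in> I"
  shows "Dlin (Yel p i) = addB (tens (Yel p i) (Xel 0)) (tens (Xel (1 / of_nat (p i))) (Yel p i))"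
proof
  fix M
  have "Dlin (Yel p i) M = (\<Sum>m\<in>{(pinv i, 0)}. Yel p i m * Dbasis m M)"
    by (rule Dlin_eq_sum) (auto simp: Yel_eq_Bbas supp_Bbas intro: Bbas_in_Bcar pinv_in_Mon[OF i] zero_in_G)
  then show "Dlin (Yel p i) M = addB (tens (Yel p i) (Xel 0)) (tens (Xel (1 / of_nat (p i))) (Yel p i)) M"
    using Dbasis_Yel[OF i] by (simp add: Yel_eq_Bbas Bbas_def pinv_def)
qed

definition Delta_spec :: "((rat \<times> rat \<Rightarrow> 'k) \<Rightarrow> (rat \<times> rat) \<times> (rat \<times> rat) \<Rightarrow> 'k) \<Rightarrow> bool" where
  "Delta_spec D \<longleftrightarrow> (\<forall>f. f \<notin> Bcar G I p \<longrightarrow> D f = (\<lambda>_. 0)) \<and>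
      (\<forall>f\<in>Bcar G I p. \<forall>g\<in>Bcar G I p. D (addB f g) = addB (D f) (D g)) \<and>
      (\<forall>c. \<forall>f\<in>Bcar G I p. D (smulB c f) = smulB c (D f)) \<and>
      (\<forall>f\<in>Bcar G I p. \<forall>g\<in>Bcar G I p. D (Bmul \<chi> f g) = Tmul \<chi> (D f) (D g)) \<and>
      (\<forall>a\<in>G. D (Xel a) = tens (Xel a) (Xel a)) \<and>
      (\<forall>i\<in>I. D (Yel p i) = addB (tens (Yel p i) (Xel 0))
                                 (tens (Xel (1 / of_nat (p i))) (Yel p i)))"

lemma Delta_eq_The: "Delta G I p \<chi> = (THE D. Delta_spec D)"
  unfolding Delta_def Delta_spec_def ..

lemma Delta_spec_Dlin: "Delta_spec Dlin"
  unfolding Delta_spec_def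
  using Dlin_addB Dlin_smulB Dlin_Bmul Dlin_Xel Dlin_Yel by (auto simp: Dlin_def)

lemma Delta_specD:
  assumes "Delta_spec D"
  shows "f \<notin> Bcar G I p \<Longrightarrow> D f = (\<lambda>_. 0)"
    and "f \<in> Bcar G I p \<Longrightarrow> g \<in> Bcar G I p \<Longrightarrow> D (addB f g) = addB (D f) (D g)"
    and "f \<in> Bcar G I p \<Longrightarrow> D (smulB c f) = smulB c (D f)"
    and "f \<in> Bcar G I p \<Longrightarrow> g \<in> Bcar G I p \<Longrightarrow> D (Bmul \<chi> f g) = Tmul \<chi> (D f) (D g)"
    and "a \<in> G \<Longrightarrow> D (Xel a) = tens (Xel a) (Xel a)"
    and "i \<in> I \<Longrightarrow> D (Yel p i) = addB (tens (Yel p i) (Xel 0)) (tens (Xel (pinv i)) (Yel p i))"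
  using assms unfolding Delta_spec_def pinv_def by blast+

lemma Delta_spec_Bbas_wt:
  assumes D: "Delta_spec D" and l: "set l \<subseteq> I"
  shows "D (Bbas (wt l) 0) = lift 0 (Dword l)"
  using l
proof (induction l)
  case Nil
  then show ?case
    using Delta_specD(5)[OF D zero_in_G] by (simp add: Xel_def lift_Bbas_0[unfolded Xel_def])
next
  case (Cons i l)
  have i: "i \<in> I" and l: "set l \<subseteq> I"
    using Cons.prems by auto
  have "Bbas (wt (i # l)) 0 = Bmul \<chi> (Bbas (wt l) 0) (Yel p i)"
    by (simp add: Yel_eq_Bbas Bmul_Bbas add.commute)
  then have "D (Bbas (wt (i # l)) 0) = Tmul \<chi> (D (Bbas (wt l) 0)) (D (Yel p i))"
    using Delta_specD(4)[OF D] wt_in_Mon[OF l] pinv_in_Mon[OF i] zero_in_G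
    by (simp add: Bbas_in_Bcar Yel_eq_Bbas)
  also have "\<dots> = tconv tcocycle (lift 0 (Dword l)) (lift 0 (Dword [i]))"
    using Cons.IH[OF l] Delta_specD(6)[OF D i] lift_Dword_single[OF i] by (simp add: Tmul_eq_tconv)
  also have "\<dots> = lift 0 (tconv cocycle (Dword l) (Dword [i]))"
    by (rule tconv_lift_0[OF finite_supp_Dword finite_supp_Dword])
  also have "\<dots> = lift 0 (Dword (i # l))"
    using Dword_append[OF l, of "[i]"] Dword_perm[of "l @ [i]" "i # l"] l i by simp
  finally show ?case .
qed

lemma Delta_spec_Bbas:
  assumes D: "Delta_spec D" and b: "b \<in> Mon" and a: "a \<in> G"
  shows "D (Bbas b a) = Dbasis (b, a)"
proof -
  obtain l where l: "set l \<subseteq> I" "b = wt l"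
    using b by (auto simp: Mon_def)
  have "Bbas b a = Bmul \<chi> (Bbas b 0) (Xel a)"
    by (simp add: Xel_def Bmul_Bbas)
  then have "D (Bbas b a) = Tmul \<chi> (D (Bbas b 0)) (D (Xel a))"
    using Delta_specD(4)[OF D] Bbas_in_Bcar[OF b zero_in_G] Xel_in_Bcar[OF a] by simp
  also have "\<dots> = tconv tcocycle (lift 0 (Dcoef b)) (lift a (Bbas 0 0))"
    using Delta_spec_Bbas_wt[OF D l(1)] Delta_specD(5)[OF D a] Dcoef_wt[OF l(1)] l(2)
    by (simp add: Tmul_eq_tconv lift_Bbas_0)
  also have "\<dots> = lift a (tconv cocycle (Dcoef b) (Bbas 0 0))"
    by (rule tconv_lift_0[OF finite_supp_Dcoef[OF b]]) (simp add: supp_Bbas)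
  also have "tconv cocycle (Dcoef b) (Bbas 0 0) = Dcoef b"
    by (rule tconv_Bbas_0_right[OF finite_supp_Dcoef[OF b]]) (simp add: cocycle_def chi_0)
  finally show ?thesis
    by (simp add: Dbasis_def)
qed

lemma Delta_spec_sum_Bbas:
  assumes D: "Delta_spec D" and S: "finite S" "\<forall>m\<in>S. fst m \<in> Mon \<and> snd m \<in> G"
  shows "(\<lambda>M. \<Sum>m\<in>S. c m * Bbas (fst m) (snd m) M) \<in> Bcar G I p \<and>
      D (\<lambda>M. \<Sum>m\<in>S. c m * Bbas (fst m) (snd m) M) = (\<lambda>M. \<Sum>m\<in>S. c m * Dbasis m M)"
  using S
proof (induction S rule: finite_induct)
  case empty
  have "(\<lambda>M. \<Sum>m\<in>{}. c m * Bbas (fst m) (snd m) M) = smulB 0 (Xel 0)"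
    by (simp add: smulB_def fun_eq_iff)
  then show ?case
    using Delta_specD(3)[OF D Xel_in_Bcar[OF zero_in_G], of 0] smulB_in_Bcar[OF Xel_in_Bcar[OF zero_in_G], of 0]
    by (simp add: smulB_def)
next
  case (insert x F)
  let ?f = "\<lambda>M. \<Sum>m\<in>F. c m * Bbas (fst m) (snd m) M"
  have x: "Bbas (fst x) (snd x) \<in> Bcar G I p"
    using insert.prems by (simp add: Bbas_in_Bcar)
  have IH: "?f \<in> Bcar G I p" "D ?f = (\<lambda>M. \<Sum>m\<in>F. c m * Dbasis m M)"
    using insert.IH insert.prems by auto
  have "(\<lambda>M. \<Sum>m\<in>insert x F. c m * Bbas (fst m) (snd m) M) = addB (smulB (c x) (Bbas (fst x) (snd x))) ?f"
    using insert.hyps by (simp add: addB_def smulB_def fun_eq_iff)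
  moreover have "D (addB (smulB (c x) (Bbas (fst x) (snd x))) ?f) = (\<lambda>M. \<Sum>m\<in>insert x F. c m * Dbasis m M)"
    using Delta_specD(2)[OF D smulB_in_Bcar[OF x] IH(1)] Delta_specD(3)[OF D x]
      Delta_spec_Bbas[OF D] insert.prems insert.hyps IH(2)
    by (simp add: addB_def smulB_def fun_eq_iff)
  ultimately show ?case
    using addB_in_Bcar[OF smulB_in_Bcar[OF x] IH(1)] by simp
qed

lemma Delta_spec_unique:
  assumes D: "Delta_spec D"
  shows "D = Dlin"
proof
  fix f
  show "D f = Dlin f"
  proof (cases "f \<in> Bcar G I p")
    case True
    then have "finite (supp f)" "\<forall>m\<in>supp f. fst m \<in> Mon \<and> snd m \<in> G"
      by (auto simp: Bcar_iff)
    then show ?thesis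
      using Delta_spec_sum_Bbas[OF D, of "supp f" f] True eq_sum_Bbas[of f] by (simp add: Dlin_def)
  qed (simp add: Delta_specD(1)[OF D] Dlin_def)
qed

lemma Delta_eq_Dlin: "Delta G I p \<chi> = Dlin"
  unfolding Delta_eq_The by (rule the_equality, rule Delta_spec_Dlin, erule Delta_spec_unique)


section \<open>Grouplike and skew primitive elements\<close>

lemma Bcar_nonzero_imp: "z \<in> Bcar G I p \<Longrightarrow> z (b, a) \<noteq> 0 \<Longrightarrow> b \<in> Mon \<and> a \<in> G"
  by (auto simp: Bcar_iff supp_def)

lemma Dbasis_eq_0:
  assumes b: "b \<in> Mon" and ne: "(b, a) \<noteq> (b\<^sub>1 + b\<^sub>2, a\<^sub>2) \<or> a\<^sub>1 \<noteq> b\<^sub>2 + a\<^sub>2"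
  shows "Dbasis (b, a) ((b\<^sub>1, a\<^sub>1), (b\<^sub>2, a\<^sub>2)) = 0"
  using ne Dcoef_nonzero_imp[OF b, of "(b\<^sub>1, b\<^sub>2)"] by (auto simp: Dbasis_def lift_def)

lemma Delta_coeff:
  assumes z: "z \<in> Bcar G I p"
  shows "Delta G I p \<chi> z ((b\<^sub>1, a\<^sub>1), (b\<^sub>2, a\<^sub>2)) =
    (if a\<^sub>1 = b\<^sub>2 + a\<^sub>2 then z (b\<^sub>1 + b\<^sub>2, a\<^sub>2) * Dcoef (b\<^sub>1 + b\<^sub>2) (b\<^sub>1, b\<^sub>2) else 0)"
proof -
  let ?M = "((b\<^sub>1, a\<^sub>1), (b\<^sub>2, a\<^sub>2))" and ?m = "(b\<^sub>1 + b\<^sub>2, a\<^sub>2)"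
  have "z m * Dbasis m ?M = (if m = ?m \<and> a\<^sub>1 = b\<^sub>2 + a\<^sub>2 then z ?m * Dbasis ?m ?M else 0)" if m: "m \<in> supp z" for m
    using Dbasis_eq_0[of "fst m" "snd m"] Bcar_nonzero_imp[OF z, of "fst m" "snd m"] m
    by (cases m) (auto simp: supp_def)
  then have "Delta G I p \<chi> z ?M = (\<Sum>m\<in>supp z. if m = ?m \<and> a\<^sub>1 = b\<^sub>2 + a\<^sub>2 then z ?m * Dbasis ?m ?M else 0)"
    using z by (simp add: Delta_eq_Dlin Dlin_def)
  also have "\<dots> = (if a\<^sub>1 = b\<^sub>2 + a\<^sub>2 then z ?m * Dbasis ?m ?M else 0)"
    using z by (auto simp: Bcar_iff supp_def)
  finally show ?thesis
    by (simp add: Dbasis_def lift_def)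
qed

lemma grouplike_coeff:
  assumes "grouplike G I p \<chi> g"
  shows "(if a\<^sub>1 = b\<^sub>2 + a\<^sub>2 then g (b\<^sub>1 + b\<^sub>2, a\<^sub>2) * Dcoef (b\<^sub>1 + b\<^sub>2) (b\<^sub>1, b\<^sub>2) else 0) = g (b\<^sub>1, a\<^sub>1) * g (b\<^sub>2, a\<^sub>2)"
  using assms Delta_coeff[of g b\<^sub>1 a\<^sub>1 b\<^sub>2 a\<^sub>2] by (simp add: grouplike_def tens_def)

lemma grouplike_Xel: "a \<in> G \<Longrightarrow> grouplike G I p \<chi> (Xel a)"
  unfolding grouplike_def Delta_eq_Dlin using Xel_in_Bcar[of a] Dlin_Xel[of a]
  by (auto simp: Xel_def Bbas_def fun_eq_iff)

text \<open>The edge coefficients \<open>Dcoef b (b, 0) = Dcoef b (0, b) = 1\<close> force a grouplike element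
  onto a single basis vector \<open>x^a\<close>.\<close>

lemma grouplike_imp_Xel:
  assumes g: "grouplike G I p \<chi> g"
  shows "g \<in> Xel ` G"
proof -
  have gB: "g \<in> Bcar G I p"
    using g by (simp add: grouplike_def)
  obtain b\<^sub>0 a\<^sub>0 where m0: "g (b\<^sub>0, a\<^sub>0) \<noteq> 0"
    using g by (auto simp: grouplike_def fun_eq_iff)
  have x0: "g (0, a') = (if a' = a then 1 else 0)" if ba: "g (b, a) \<noteq> 0" for b a a'
    using grouplike_coeff[OF g, where b\<^sub>1 = b and a\<^sub>1 = a and b\<^sub>2 = 0 and a\<^sub>2 = a']
      Dcoef_top Bcar_nonzero_imp[OF gB ba] ba
    by (cases "a = a'") auto
  have a0: "a = a\<^sub>0" if "g (b, a) \<noteq> 0" for b a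
    using x0[OF that, of a\<^sub>0] x0[OF m0, of a\<^sub>0] by (auto split: if_splits)
  have b0: "b = 0" if ba: "g (b, a) \<noteq> 0" for b a
  proof -
    have "g (b, a) = g (0, b + a) * g (b, a)"
      using grouplike_coeff[OF g, where b\<^sub>1 = 0 and a\<^sub>1 = "b + a" and b\<^sub>2 = b and a\<^sub>2 = a] Dcoef_bot Bcar_nonzero_imp[OF gB ba] by simp
    then have "g (0, b + a) = 1"
      using ba by simp
    then show ?thesis
      using x0[OF ba, of "b + a"] by (simp split: if_splits)
  qed
  have "g = Xel a\<^sub>0"
  proof
    fix m :: "rat \<times> rat"
    show "g m = Xel a\<^sub>0 m"
      using a0 b0 x0[OF m0, of a\<^sub>0] by (cases m, cases "g m = 0") (auto simp: Xel_def Bbas_def)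
  qed
  moreover have "a\<^sub>0 \<in> G"
    using Bcar_nonzero_imp[OF gB m0] by simp
  ultimately show ?thesis
    by blast
qed

lemma grouplike_eq_Xel: "{g. grouplike G I p \<chi> g} = Xel ` G"
  using grouplike_Xel grouplike_imp_Xel by blast

lemma skew_prim_coeff:
  assumes "skew_prim G I p \<chi> (Xel a) z"
  shows "(if a\<^sub>1 = b\<^sub>2 + a\<^sub>2 then z (b\<^sub>1 + b\<^sub>2, a\<^sub>2) * Dcoef (b\<^sub>1 + b\<^sub>2) (b\<^sub>1, b\<^sub>2) else 0) =
    (if (b\<^sub>2, a\<^sub>2) = (0, 0) then z (b\<^sub>1, a\<^sub>1) else 0) + (if (b\<^sub>1, a\<^sub>1) = (0, a) then z (b\<^sub>2, a\<^sub>2) else 0)"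
proof -
  have "z \<in> Bcar G I p" "Delta G I p \<chi> z = addB (tens z (Xel 0)) (tens (Xel a) z)"
    using assms by (simp_all add: skew_prim_def)
  then have "Delta G I p \<chi> z ((b\<^sub>1, a\<^sub>1), (b\<^sub>2, a\<^sub>2)) =
      (if (b\<^sub>2, a\<^sub>2) = (0, 0) then z (b\<^sub>1, a\<^sub>1) else 0) + (if (b\<^sub>1, a\<^sub>1) = (0, a) then z (b\<^sub>2, a\<^sub>2) else 0)"
    by (simp add: addB_def tens_def Xel_def Bbas_def)
  then show ?thesis
    by (simp only: Delta_coeff[OF \<open>z \<in> Bcar G I p\<close>])
qed

lemma skew_prim_supp:
  assumes sp: "skew_prim G I p \<chi> (Xel a) z" and nz: "z (b, a') \<noteq> 0"
  shows "a' = 0 \<or> (b = 0 \<and> a' = a)"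
  using skew_prim_coeff[OF sp, where b\<^sub>1 = b and a\<^sub>1 = a' and b\<^sub>2 = 0 and a\<^sub>2 = a'] Dcoef_top[of b] nz
    Bcar_nonzero_imp[of z b a'] sp by (auto simp: skew_prim_def split: if_splits)

lemma skew_prim_Xel:
  assumes a: "a \<in> G" and sp: "skew_prim G I p \<chi> (Xel a) z"
  shows "\<exists>c. \<exists>w\<in>kM G I p. z = addB (smulB c (addB (Xel 0) (smulB (-1) (Xel a)))) w"
proof -
  have z: "z \<in> Bcar G I p"
    using sp by (simp add: skew_prim_def)
  define c where "c = (if a = 0 then 0 else - z (0, a))"
  define w where "w m = (if snd m = 0 then z m - c * Xel 0 m else 0)" for m
  have sw: "supp w \<subseteq> supp z \<union> {(0, 0)}"
    by (auto simp: supp_def w_def Xel_def Bbas_def)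
  then have "finite (supp w)"
    using z by (auto simp: Bcar_iff intro: finite_subset)
  moreover have "\<forall>m\<in>supp w. fst m \<in> Mon \<and> snd m \<in> G"
    using sw z zero_in_G zero_in_Mon by (fastforce simp: Bcar_iff)
  ultimately have "w \<in> kM G I p"
    by (simp add: Bcar_iff kM_def w_def)
  moreover have "z m = addB (smulB c (addB (Xel 0) (smulB (-1) (Xel a)))) w m" for m
  proof (cases "snd m = 0")
    case True
    then show ?thesis
      by (cases m) (auto simp: w_def c_def addB_def smulB_def Xel_def Bbas_def)
  next
    case False
    then have "z m = (if m = (0, a) then z (0, a) else 0)"
      using skew_prim_supp[OF sp, of "fst m" "snd m"] by (cases m) auto
    with False show ?thesis
      by (auto simp: w_def c_def addB_def smulB_def Xel_def Bbas_def)
  qed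
  ultimately show ?thesis
    by blast
qed

lemma skew_prim_top:
  assumes sp: "skew_prim G I p \<chi> (Xel a) z" and b: "b \<noteq> 0" "z (b, 0) \<noteq> 0"
  shows "b = a"
  using skew_prim_coeff[OF sp, where b\<^sub>1 = 0 and a\<^sub>1 = b and b\<^sub>2 = b and a\<^sub>2 = 0] Dcoef_bot[of b] b Bcar_nonzero_imp[of z b 0] sp
  by (auto simp: skew_prim_def split: if_splits)

lemma skew_prim_corner:
  assumes sp: "skew_prim G I p \<chi> (Xel a) z" and a: "a \<noteq> 0"
  shows "z (0, 0) = - z (0, a)"
  using skew_prim_coeff[OF sp, where b\<^sub>1 = 0 and a\<^sub>1 = a and b\<^sub>2 = 0 and a\<^sub>2 = 0] a by (simp add: eq_neg_iff_add_eq_0 add.commute)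

lemma skew_prim_atom:
  assumes sp: "skew_prim G I p \<chi> (Xel a) z" and a: "a \<in> Mon" "a \<noteq> 0" "z (a, 0) \<noteq> 0"
  shows "a = 1 \<or> (\<exists>i\<in>I. a = pinv i)"
proof (rule ccontr)
  assume "\<not> (a = 1 \<or> (\<exists>i\<in>I. a = pinv i))"
  then obtain b\<^sub>1 b\<^sub>2 where b: "b\<^sub>1 \<noteq> 0" "b\<^sub>2 \<noteq> 0" "Dcoef a (b\<^sub>1, b\<^sub>2) \<noteq> 0"
    using Dcoef_inner_nonzero[OF a(1,2)] by blast
  then have "b\<^sub>1 + b\<^sub>2 = a"
    using Dcoef_nonzero_imp[OF a(1)] by fastforce
  then show False
    using skew_prim_coeff[OF sp, where b\<^sub>1 = b\<^sub>1 and a\<^sub>1 = b\<^sub>2 and b\<^sub>2 = b\<^sub>2 and a\<^sub>2 = 0] a b by simp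
qed

lemma skew_prim_notin_kG_shape:
  assumes sp: "skew_prim G I p \<chi> (Xel a) z" and nkG: "z \<notin> kG G I p"
  shows "(a = 1 \<or> (\<exists>i\<in>I. a = pinv i)) \<and>
    z = addB (smulB (z (a, 0)) (Bbas a 0)) (smulB (z (0, 0)) (addB (Xel 0) (smulB (-1) (Xel a))))"
proof -
  have z: "z \<in> Bcar G I p"
    using sp by (simp add: skew_prim_def)
  obtain b a' where ba: "z (b, a') \<noteq> 0" "b \<noteq> 0"
    using nkG z by (auto simp: kG_def)
  then have "z (b, 0) \<noteq> 0"
    using skew_prim_supp[OF sp ba(1)] by auto
  then have "b = a" and za: "z (a, 0) \<noteq> 0"
    using skew_prim_top[OF sp ba(2)] by simp_all
  then have a: "a \<noteq> 0" "a \<in> Mon"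
    using ba(2) Bcar_nonzero_imp[OF z za] by simp_all
  have "z m = 0" if "m \<noteq> (a, 0)" "m \<noteq> (0, 0)" "m \<noteq> (0, a)" for m
    using that skew_prim_supp[OF sp, of "fst m" "snd m"] skew_prim_top[OF sp, of "fst m"]
    by (cases m) fastforce
  then have "z = addB (smulB (z (a, 0)) (Bbas a 0)) (smulB (z (0, 0)) (addB (Xel 0) (smulB (-1) (Xel a))))"
    using a skew_prim_corner[OF sp a(1)]
    by (auto simp: fun_eq_iff addB_def smulB_def Xel_def Bbas_def)
  then show ?thesis
    using skew_prim_atom[OF sp a(2,1) za] by blast
qed

lemma skew_prim_notin_kG:
  assumes sp: "skew_prim G I p \<chi> g z" and nkG: "z \<notin> kG G I p"
  shows "(\<exists>i\<in>I. \<exists>b c. z = addB (smulB b (Yel p i))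
                          (smulB c (addB (Xel 0) (smulB (-1) (Xel (1 / of_nat (p i)))))))
         \<or> (\<exists>b c. z = addB (smulB b (Bbas 1 0))
                          (smulB c (addB (Xel 0) (smulB (-1) (Xel 1)))))"
proof -
  obtain a where "g = Xel a"
    using sp grouplike_imp_Xel by (auto simp: skew_prim_def)
  with sp nkG have "(a = 1 \<or> (\<exists>i\<in>I. a = pinv i)) \<and>
    z = addB (smulB (z (a, 0)) (Bbas a 0)) (smulB (z (0, 0)) (addB (Xel 0) (smulB (-1) (Xel a))))"
    by (intro skew_prim_notin_kG_shape) simp_all
  then show ?thesis
    by (auto simp: Yel_eq_Bbas pinv_def)
qed

end

theorem lemma2p4:
  fixes G :: "rat set" and I :: "'i set" and p :: "'i \<Rightarrow> nat" and \<chi> :: "rat \<Rightarrow> 'k::{alg_closed_field, field_char_0}"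
  assumes G_grp: "\<forall>a\<in>G. \<forall>b\<in>G. a + b \<in> G" "\<forall>a\<in>G. - a \<in> G"
    and G_Z: "(\<int> :: rat set) \<subseteq> G"
    and I2: "\<exists>i\<in>I. \<exists>j\<in>I. i \<noteq> j"
    and p2: "\<forall>i\<in>I. p i \<ge> 2"
    and pcop: "\<forall>i\<in>I. \<forall>j\<in>I. i \<noteq> j \<longrightarrow> coprime (p i) (p j)"
    and pG: "\<forall>i\<in>I. 1 / of_nat (p i) \<in> G"
    and chi_hom: "\<forall>u\<in>GMset G I p. \<forall>v\<in>GMset G I p. \<chi> (u + v) = \<chi> u * \<chi> v"
    and chi_unit: "\<forall>u\<in>GMset G I p. \<chi> u \<noteq> 0"
    and chi_prim: "\<forall>i\<in>I. \<chi> (1 / of_nat (p i) ^ 2) ^ p i = 1 \<and>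
                      (\<forall>n. 0 < n \<and> n < p i \<longrightarrow> \<chi> (1 / of_nat (p i) ^ 2) ^ n \<noteq> 1)"
  shows "{g. grouplike G I p \<chi> g} = Xel ` G \<and>
       (\<forall>a\<in>G. \<forall>z. skew_prim G I p \<chi> (Xel a) z \<longrightarrow>
           (\<exists>c. \<exists>w\<in>kM G I p. z = addB (smulB c (addB (Xel 0) (smulB (-1) (Xel a)))) w)) \<and>
       (\<forall>g z. skew_prim G I p \<chi> g z \<and> z \<notin> kG G I p \<longrightarrow>
           (\<exists>i\<in>I. \<exists>b c. z = addB (smulB b (Yel p i))
                          (smulB c (addB (Xel 0) (smulB (-1) (Xel (1 / of_nat (p i)))))))
         \<or> (\<exists>b c. z = addB (smulB b (Bbas 1 0))
                          (smulB c (addB (Xel 0) (smulB (-1) (Xel 1))))))"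
proof -
  interpret BG G I p \<chi>
    using G_grp G_Z p2 pcop pG chi_hom chi_unit chi_prim by unfold_locales auto
  show ?thesis
    using grouplike_eq_Xel skew_prim_Xel skew_prim_notin_kG by blast
qed

end
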